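(* Fix $y\in\mathbb{R}^{n_y}$, $z\in\mathbb{R}^{n_z}$ and $\lambda\in\mathbb{R}^{n_z}$. Then there exists $\beta>0$ such that for every $t<0$ and every partition $P$ of $[t,0)$ into subintervals $[t_0,t_1),\dots,[t_{r-1},t_r)$ with $t_0=t<t_1<\dots<t_r=0$, $$\big|\tilde{V}^{P,+}_{z,\lambda}(t,y) - H(z,\lambda)\big| \le \frac{\beta}{|t|} \quad\text{and}\quad \big|\tilde{V}^{P,-}_{z,\lambda}(t,y) - H(z,\lambda)\big| \le \frac{\beta}{|t|}.$$
   Context: $\mathcal{U}\subset\mathbb{R}^{m_u}$, $\mathcal{D}\subset\mathbb{R}^{m_d}$ are nonempty compact sets. $f:\mathbb{R}^{n_z}\times\mathcal{U}\times\mathcal{D}\to\mathbb{R}^{n_z}$, $g:\mathbb{R}^{n_z}\times\mathcal{U}\times\mathcal{D}\to\mathbb{R}^{n_y}$, $A:\mathbb{R}^{n_z}\times\mathcal{U}\times\mathcal{D}\to\mathbb{R}^{n_y\times n_y}$, $M:\mathbb{R}^{n_z}\to\mathbb{R}^{n_z\times n_y}$ are continuous. Stability assumption: for the fixed $z$ there is a symmetric positive definite $P_0$ with $A(z,u,d)^\top P_0+P_0A(z,u,d)$ negative definite for all $u\in\mathcal{U}$, $d\in\mathcal{D}$. $F(z,u,d)=f(z,u,d)-M(z)g(z,u,d)$. Saddle-point assumption: $\min_{u\in\mathcal{U}}\max_{d\in\mathcal{D}}\lambda^\top F(z,u,d)=\max_{d\in\mathcal{D}}\min_{u\in\mathcal{U}}\lambda^\top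 F(z,u,d)=:H(z,\lambda)$ for all $z,\lambda$. $\mathbb{U}_{[a,b)}$ (resp. $\mathbb{D}_{[a,b)}$) is the set of measurable functions $[a,b)\to\mathcal{U}$ (resp. $\to\mathcal{D}$). Given $\mathbf{h}_j:[t_{j-1},t_j)\to\mathbb{R}^m$, $j=1,\dots,r$, $[\mathbf{h}_1,\dots,\mathbf{h}_r)$ denotes the function on $[t_0,t_r)$ equal to $\mathbf{h}_j$ on $[t_{j-1},t_j)$. For $t<0$, $\mathbf{u}\in\mathbb{U}_{[t,0)}$, $\mathbf{d}\in\mathbb{D}_{[t,0)}$, $\tilde{\mathbf{y}}^{z,\mathbf{u},\mathbf{d}}_{t,y}$ is the Carathéodory solution on $[t,0]$ of $\dot{\mathbf{y}}=g(z,\mathbf{u},\mathbf{d})+A(z,\mathbf{u},\mathbf{d})\mathbf{y}$, $\mathbf{y}(t)=y$, and $\tilde{J}^{z,\lambda}_{t,y}(\mathbf{u},\mathbf{d})=\frac{1}{|t|}\int_t^0\lambda^\top[f(z,\mathbf{u}(\tau),\mathbf{d}(\tau))+M(z)A(z,\mathbf{u}(\tau),\mathbf{d}(\tau))\tilde{\mathbf{y}}^{z,\mathbf{u},\mathbf{d}}_{t,y}(\tau)]\,d\tau$. With $\mathbb{U}_j=\mathbb{U}_{[t_{j-1},t_j)}$, $\mathbb{D}_j=\mathbb{D}_{[t_{j-1},t_j)}$, the upper and lower values are $$\tilde{V}^{P,+}_{z,\lambda}(t,y)=\inf_{\mathbf{u}_1\in\mathbb{U}_1}\sup_{\mathbf{d}_1\in\mathbb{D}_1}\cdots\inf_{\mathbf{u}_r\in\mathbb{U}_r}\sup_{\mathbf{d}_r\in\mathbb{D}_r}\tilde{J}^{z,\lambda}_{t,y}([\mathbf{u}_1,\dots,\mathbf{u}_r),[\mathbf{d}_1,\dots,\mathbf{d}_r)),$$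 $$\tilde{V}^{P,-}_{z,\lambda}(t,y)=\sup_{\mathbf{d}_1\in\mathbb{D}_1}\inf_{\mathbf{u}_1\in\mathbb{U}_1}\cdots\sup_{\mathbf{d}_r\in\mathbb{D}_r}\inf_{\mathbf{u}_r\in\mathbb{U}_r}\tilde{J}^{z,\lambda}_{t,y}([\mathbf{u}_1,\dots,\mathbf{u}_r),[\mathbf{d}_1,\dots,\mathbf{d}_r)).$$ *)

theory Defs
  imports "HOL-Analysis.Analysis"
begin

definition sym_posdef :: "real^'n^'n \<Rightarrow> bool" where
  "sym_posdef P \<longleftrightarrow> transpose P = P \<and> (\<forall>x. x \<noteq> 0 \<longrightarrow> x \<bullet> (P *v x) > 0)"

definition negdef :: "real^'n^'n \<Rightarrow> bool" where
  "negdef Q \<longleftrightarrow> (\<forall>x. x \<noteq> 0 \<longrightarrow> x \<bullet> (Q *v x) < 0)"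

text \<open>Measurable functions on [a,b) with values in S (values outside [a,b) are irrelevant).\<close>
definition admissible :: "'a::euclidean_space set \<Rightarrow> real \<Rightarrow> real \<Rightarrow> (real \<Rightarrow> 'a) set" where
  "admissible S a b = {u. (\<forall>\<tau>\<in>{a..<b}. u \<tau> \<in> S) \<and> u measurable_on {a..<b}}"

definition glue :: "real \<Rightarrow> real \<Rightarrow> (real \<Rightarrow> 'a) \<Rightarrow> (real \<Rightarrow> 'a) \<Rightarrow> real \<Rightarrow> 'a" where
  "glue a b h acc = (\<lambda>\<tau>. if \<tau> \<in> {a..<b} then h \<tau> else acc \<tau>)"

text \<open>Caratheodory solution on [t,0] of  y' = g(z,u,d) + A(z,u,d) y, y(t) = y0, in integral form.\<close>
definition is_car_sol ::
  "(real^'nz \<Rightarrow> real^'mu \<Rightarrow> real^'md \<Rightarrow> real^'ny) \<Rightarrow>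
   (real^'nz \<Rightarrow> real^'mu \<Rightarrow> real^'md \<Rightarrow> real^'ny^'ny) \<Rightarrow>
   real^'nz \<Rightarrow> (real \<Rightarrow> real^'mu) \<Rightarrow> (real \<Rightarrow> real^'md) \<Rightarrow> real \<Rightarrow> real^'ny \<Rightarrow>
   (real \<Rightarrow> real^'ny) \<Rightarrow> bool" where
  "is_car_sol g A z u d t y0 Y \<longleftrightarrow>
     (\<forall>\<tau>\<in>{t..0}. ((\<lambda>s. g z (u s) (d s) + A z (u s) (d s) *v Y s) has_integral (Y \<tau> - y0)) {t..\<tau>})"

definition ytil ::
  "(real^'nz \<Rightarrow> real^'mu \<Rightarrow> real^'md \<Rightarrow> real^'ny) \<Rightarrow>
   (real^'nz \<Rightarrow> real^'mu \<Rightarrow> real^'md \<Rightarrow> real^'ny^'ny) \<Rightarrow>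
   real^'nz \<Rightarrow> (real \<Rightarrow> real^'mu) \<Rightarrow> (real \<Rightarrow> real^'md) \<Rightarrow> real \<Rightarrow> real^'ny \<Rightarrow>
   real \<Rightarrow> real^'ny" where
  "ytil g A z u d t y0 = (THE Y. is_car_sol g A z u d t y0 Y \<and> (\<forall>\<tau>. \<tau> \<notin> {t..0} \<longrightarrow> Y \<tau> = 0))"

definition Jtil ::
  "(real^'nz \<Rightarrow> real^'mu \<Rightarrow> real^'md \<Rightarrow> real^'nz) \<Rightarrow>
   (real^'nz \<Rightarrow> real^'mu \<Rightarrow> real^'md \<Rightarrow> real^'ny) \<Rightarrow>
   (real^'nz \<Rightarrow> real^'mu \<Rightarrow> real^'md \<Rightarrow> real^'ny^'ny) \<Rightarrow>
   (real^'nz \<Rightarrow> real^'ny^'nz) \<Rightarrow>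
   real^'nz \<Rightarrow> real^'nz \<Rightarrow> real \<Rightarrow> real^'ny \<Rightarrow>
   (real \<Rightarrow> real^'mu) \<Rightarrow> (real \<Rightarrow> real^'md) \<Rightarrow> real" where
  "Jtil f g A M z lam t y0 u d =
     (1 / \<bar>t\<bar>) * integral {t..0}
        (\<lambda>\<tau>. lam \<bullet> (f z (u \<tau>) (d \<tau>) + M z *v (A z (u \<tau>) (d \<tau>) *v ytil g A z u d t y0 \<tau>)))"

text \<open>Partition  t = t_0 < t_1 < ... < t_r = 0, represented by the list [t_1,...,t_r].\<close>
definition is_partition :: "real \<Rightarrow> real list \<Rightarrow> bool" where
  "is_partition t ts \<longleftrightarrow> ts \<noteq> [] \<and> sorted_wrt (<) (t # ts) \<and> last ts = 0"

fun vplus :: "'a::euclidean_space set \<Rightarrow> 'b::euclidean_space set \<Rightarrow>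
    ((real \<Rightarrow> 'a) \<Rightarrow> (real \<Rightarrow> 'b) \<Rightarrow> real) \<Rightarrow> real \<Rightarrow> real list \<Rightarrow>
    (real \<Rightarrow> 'a) \<Rightarrow> (real \<Rightarrow> 'b) \<Rightarrow> real" where
  "vplus U D J a [] uacc dacc = J uacc dacc"
| "vplus U D J a (b # bs) uacc dacc =
     (INF u\<in>admissible U a b. SUP d\<in>admissible D a b.
        vplus U D J b bs (glue a b u uacc) (glue a b d dacc))"

fun vminus :: "'a::euclidean_space set \<Rightarrow> 'b::euclidean_space set \<Rightarrow>
    ((real \<Rightarrow> 'a) \<Rightarrow> (real \<Rightarrow> 'b) \<Rightarrow> real) \<Rightarrow> real \<Rightarrow> real list \<Rightarrow>
    (real \<Rightarrow> 'a) \<Rightarrow> (real \<Rightarrow> 'b) \<Rightarrow> real" where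
  "vminus U D J a [] uacc dacc = J uacc dacc"
| "vminus U D J a (b # bs) uacc dacc =
     (SUP d\<in>admissible D a b. INF u\<in>admissible U a b.
        vminus U D J b bs (glue a b u uacc) (glue a b d dacc))"

definition Vplus where
  "Vplus U D f g A M z lam ts t y0 =
     vplus U D (Jtil f g A M z lam t y0) t ts (\<lambda>_. undefined) (\<lambda>_. undefined)"

definition Vminus where
  "Vminus U D f g A M z lam ts t y0 =
     vminus U D (Jtil f g A M z lam t y0) t ts (\<lambda>_. undefined) (\<lambda>_. undefined)"

definition Fmap where
  "Fmap f g M z u d = f z u d - M z *v g z u d"

definition Ham where
  "Ham U D f g M z lam = (INF u\<in>U. SUP d\<in>D. lam \<bullet> Fmap f g M z u d)"

end

theory Submission
  imports Defs
begin

text \<open>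
  Along a trajectory \<open>y' = g + A y\<close> one has \<open>f + M A y = F + M y'\<close>, so the cost \<open>J(u, d)\<close> is the
  time average of the running payoff \<open>\<lambda> \<bullet> F(u, d)\<close> plus the boundary term
  \<open>\<lambda> \<bullet> M (y(0) - y) / |t|\<close>. The stability assumption yields a quadratic Lyapunov function
  \<open>V x = x \<bullet> P x\<close> with \<open>V (y (s + \<delta>)) \<le> (1 - \<alpha> \<delta>) V (y s) + \<gamma> \<delta> + O(\<delta>\<^sup>2)\<close> along every trajectory,
  so \<open>y(0)\<close> stays in a ball that depends neither on \<open>t\<close> nor on the controls: \<open>J\<close> is the average of
  \<open>\<lambda> \<bullet> F\<close> up to \<open>\<beta> / |t|\<close>. If the minimiser plays, on the whole interval, a constant control that
  is \<open>\<epsilon>\<close>-optimal for the static game \<open>min\<^sub>u max\<^sub>d \<lambda> \<bullet> F\<close>, every disturbance gives an average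
  below \<open>H + \<epsilon>\<close>; this bounds both the upper and the lower value from above. A constant disturbance
  bounds them from below by the static max-min value, and the saddle-point assumption makes the two
  static values equal to \<open>H\<close>.
\<close>

lemma norm_matrix_vector_mult_le:
  fixes A :: "real^'n^'m"
  shows "norm (A *v x) \<le> real CARD('m) * real CARD('n) * norm A * norm x"
proof -
  have "onorm ((*v) A) \<le> real CARD('m) * real CARD('n) * norm A"
  proof (rule onorm_le_matrix_component)
    fix i j
    have "\<bar>A $ i $ j\<bar> \<le> norm (A $ i)" by (rule component_le_norm_cart)
    also have "\<dots> \<le> norm A" by (rule Finite_Cartesian_Product.norm_nth_le)
    finally show "\<bar>A $ i $ j\<bar> \<le> norm A" .
  qed
  moreover have "norm (A *v x) \<le> onorm ((*v) A) * norm x"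
    by (rule onorm) simp
  ultimately show ?thesis
    by (meson mult_right_mono norm_ge_zero order_trans)
qed

lemma abs_inner_matrix_vector_mult_le:
  fixes M :: "real^'n^'m"
  shows "\<bar>lam \<bullet> (M *v v)\<bar> \<le> norm lam * (real CARD('m) * real CARD('n) * norm M) * norm v"
proof -
  have "\<bar>lam \<bullet> (M *v v)\<bar> \<le> norm lam * norm (M *v v)" by (rule Cauchy_Schwarz_ineq2)
  also have "\<dots> \<le> norm lam * (real CARD('m) * real CARD('n) * norm M * norm v)"
    by (intro mult_left_mono norm_matrix_vector_mult_le) auto
  finally show ?thesis by (simp add: mult_ac)
qed

lemma bilinear_matrix_vector_mult: "bilinear (\<lambda>(A::real^'n^'m) x. A *v x)"
  unfolding bilinear_def
proof (intro allI conjI)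
  fix A :: "real^'n^'m" and x :: "real^'n"
  show "linear (\<lambda>x. A *v x)" by simp
  show "linear (\<lambda>A. A *v x)"
    by (rule linearI) (simp_all add: matrix_vector_mult_add_rdistrib scaleR_matrix_vector_assoc)
qed

lemma continuous_on_matrix_vector_mult [continuous_intros]:
  fixes F :: "'a::topological_space \<Rightarrow> real^'n^'m"
  shows "continuous_on S F \<Longrightarrow> continuous_on S G \<Longrightarrow> continuous_on S (\<lambda>x. F x *v G x)"
  using bounded_bilinear.continuous_on[OF bilinear_conv_bounded_bilinear[THEN iffD1,
      OF bilinear_matrix_vector_mult]] by blast

lemma measurable_on_matrix_vector_mult:
  fixes F :: "real \<Rightarrow> real^'n^'m"
  shows "F measurable_on S \<Longrightarrow> G measurable_on S \<Longrightarrow> (\<lambda>x. F x *v G x) measurable_on S"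
  using measurable_on_bilinear[OF bilinear_matrix_vector_mult] by blast

lemma measurable_bounded_integrable_on:
  fixes f :: "real \<Rightarrow> 'b::euclidean_space"
  assumes "f measurable_on {a..b}" "\<And>x. x \<in> {a..b} \<Longrightarrow> norm (f x) \<le> B"
  shows "f integrable_on {a..b}"
  by (rule measurable_bounded_by_integrable_imp_integrable[where g="\<lambda>_. B"])
     (use assms in \<open>auto simp: measurable_on_iff_borel_measurable\<close>)

lemma continuous_on_imp_measurable_on_interval:
  fixes f :: "real \<Rightarrow> 'b::euclidean_space"
  shows "continuous_on {a..b} f \<Longrightarrow> f measurable_on {a..b}"
  by (simp add: continuous_imp_measurable_on_sets_lebesgue measurable_on_iff_borel_measurable)

lemma measurable_on_compose_continuous_on_closed:
  fixes u :: "real \<Rightarrow> 'a::euclidean_space" and F :: "'a \<Rightarrow> 'c::euclidean_space"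
  assumes u: "u measurable_on S" and S: "S \<in> sets lebesgue"
    and C: "closed C" and uC: "\<And>x. x \<in> S \<Longrightarrow> u x \<in> C" and F: "continuous_on C F"
  shows "(\<lambda>x. F (u x)) measurable_on S"
proof -
  obtain G where G: "continuous_on UNIV G" "\<And>x. x \<in> C \<Longrightarrow> G x = F x"
    using Tietze_unbounded[OF F, of UNIV] C by auto
  have "(\<lambda>x. if x \<in> S then u x else 0) measurable_on UNIV"
    using u measurable_on_UNIV by blast
  then have "(\<lambda>x. G (if x \<in> S then u x else 0)) measurable_on UNIV"
    using measurable_on_compose_continuous[OF _ G(1)] by (simp add: o_def)
  then have "(\<lambda>x. if x \<in> S then G (if x \<in> S then u x else 0) else 0) measurable_on UNIV"
    by (rule measurable_on_restrict[OF _ S])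
  moreover have "(\<lambda>x. if x \<in> S then G (if x \<in> S then u x else 0) else 0) = (\<lambda>x. if x \<in> S then F (u x) else 0)"
    using G uC by (intro ext) auto
  ultimately show ?thesis using measurable_on_UNIV by metis
qed

lemma bounded_on_interval_of_continuous:
  fixes f :: "real \<Rightarrow> 'a::real_normed_vector"
  assumes "continuous_on {a..c} f"
  obtains L where "\<And>s. s \<in> {a..c} \<Longrightarrow> norm (f s) \<le> L"
proof -
  have "compact (f ` {a..c})" by (rule compact_continuous_image[OF assms]) simp
  then show ?thesis using that by (meson bounded_iff compact_imp_bounded imageI)
qed

lemma exp_series_term_tendsto_zero: "(\<lambda>k. C * (x::real) ^ k / fact k) \<longlonglongrightarrow> 0"
proof -
  have "(\<lambda>k. x ^ k /\<^sub>R fact k) \<longlonglongrightarrow> 0"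
    by (rule summable_LIMSEQ_zero[OF summable_exp_generic])
  then have "(\<lambda>k. C * (x ^ k /\<^sub>R fact k)) \<longlonglongrightarrow> C * 0" by (intro tendsto_intros)
  then show ?thesis by (simp add: field_simps)
qed

lemma has_integral_power_shift:
  assumes "t \<le> \<tau>"
  shows "((\<lambda>s. (s - t) ^ k) has_integral ((\<tau> - t) ^ Suc k / real (Suc k))) {t..\<tau>}"
proof -
  have "((\<lambda>s. (s - t) ^ Suc k / real (Suc k)) has_real_derivative
          real (Suc k) * (s - t) ^ k * 1 / real (Suc k)) (at s within {t..\<tau>})" for s
    by (intro DERIV_cdivide DERIV_power derivative_eq_intros) auto
  then have "((\<lambda>s. (s - t) ^ Suc k / real (Suc k)) has_vector_derivative (s - t) ^ k) (at s within {t..\<tau>})" for s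
    by (simp add: has_real_derivative_iff_has_vector_derivative[symmetric] del: of_nat_Suc)
  from fundamental_theorem_of_calculus[OF assms this] show ?thesis by simp
qed

lemma integral_le_half_open:
  fixes f :: "real \<Rightarrow> real"
  assumes f: "f integrable_on {a..b}" and ab: "a \<le> b" and le: "\<And>s. s \<in> {a..<b} \<Longrightarrow> f s \<le> C"
  shows "integral {a..b} f \<le> C * (b - a)"
proof -
  let ?g = "\<lambda>s. if s = b then C else f s"
  have g: "?g integrable_on {a..b}"
    by (rule integrable_spike[OF f, of "{b}"]) auto
  have "integral {a..b} f = integral {a..b} ?g"
    by (rule integral_spike[of "{b}"]) auto
  also have "\<dots> \<le> integral {a..b} (\<lambda>_. C)"
    using le by (intro integral_le[OF g]) auto
  also have "\<dots> = C * (b - a)" using ab by simp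
  finally show ?thesis .
qed

lemma abs_integral_le_half_open:
  fixes f :: "real \<Rightarrow> real"
  assumes f: "f integrable_on {a..b}" and ab: "a \<le> b" and le: "\<And>s. s \<in> {a..<b} \<Longrightarrow> \<bar>f s\<bar> \<le> K"
  shows "\<bar>integral {a..b} f\<bar> \<le> K * (b - a)"
proof -
  have "integral {a..b} f \<le> K * (b - a)"
    using le by (intro integral_le_half_open[OF f ab]) (simp add: abs_le_iff)
  moreover have "- integral {a..b} f \<le> K * (b - a)"
    using le integral_le_half_open[OF integrable_neg[OF f] ab, of K] by (simp add: abs_le_iff)
  ultimately show ?thesis by linarith
qed

lemma twice_mult_sub_le:
  fixes c p x :: real
  assumes "c > 0"
  shows "2 * (p * x - c * x\<^sup>2) \<le> p\<^sup>2 / c - c * x\<^sup>2"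
proof -
  have "0 \<le> (p - c * x)\<^sup>2 / c" using assms by simp
  then show ?thesis using assms by (simp add: power2_eq_square field_simps)
qed

lemma affine_recursion_le:
  fixes v :: "nat \<Rightarrow> real"
  assumes a: "0 \<le> a" "a \<le> 1" and e: "e \<le> a * B" and v0: "v 0 \<le> B"
    and step: "\<And>k. k < n \<Longrightarrow> v (Suc k) \<le> v k * (1 - a) + e"
  shows "v n \<le> B"
proof -
  have "k \<le> n \<Longrightarrow> v k \<le> B" for k
  proof (induction k)
    case (Suc k)
    then have "v (Suc k) \<le> B * (1 - a) + a * B"
      using step[of k] mult_right_mono[of "v k" B "1 - a"] a e by fastforce
    then show ?case by (simp add: algebra_simps)
  qed (use v0 in simp)
  then show ?thesis by simp
qed

context
  fixes V :: "real \<Rightarrow> real" and t \<alpha> \<gamma> E :: real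
  assumes t: "t \<le> 0" and \<alpha>: "0 < \<alpha>"
    and step: "\<And>s \<delta>. t \<le> s \<Longrightarrow> 0 \<le> \<delta> \<Longrightarrow> s + \<delta> \<le> 0 \<Longrightarrow>
                 V (s + \<delta>) \<le> V s * (1 - \<alpha> * \<delta>) + \<gamma> * \<delta> + E * \<delta>\<^sup>2"
begin

lemma one_step_decay_grid_bound:
  assumes n: "n > 0" "\<alpha> * (- t / real n) \<le> 1"
  shows "V 0 \<le> max (V t) ((\<gamma> + E * (- t / real n)) / \<alpha>)"
proof -
  define \<delta> where "\<delta> = - t / real n"
  define B where "B = max (V t) ((\<gamma> + E * \<delta>) / \<alpha>)"
  have \<delta>: "0 \<le> \<delta>" unfolding \<delta>_def using t by (simp add: divide_nonpos_nonneg)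
  have end_point: "t + real n * \<delta> = 0" unfolding \<delta>_def using n by simp
  have "V (t + real n * \<delta>) \<le> B"
  proof (rule affine_recursion_le[where a = "\<alpha> * \<delta>" and e = "\<gamma> * \<delta> + E * \<delta>\<^sup>2"])
    show "0 \<le> \<alpha> * \<delta>" using \<alpha> \<delta> by simp
    show "\<alpha> * \<delta> \<le> 1" using n by (simp add: \<delta>_def)
    have "(\<gamma> + E * \<delta>) / \<alpha> \<le> B" unfolding B_def by simp
    then have "\<gamma> + E * \<delta> \<le> \<alpha> * B" using \<alpha> by (simp add: pos_divide_le_eq mult.commute)
    then show "\<gamma> * \<delta> + E * \<delta>\<^sup>2 \<le> \<alpha> * \<delta> * B"
      using mult_right_mono[OF _ \<delta>] by (fastforce simp: power2_eq_square algebra_simps)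
    show "V (t + real 0 * \<delta>) \<le> B" by (simp add: B_def)
  next
    fix k assume "k < n"
    then have "t + real k * \<delta> + \<delta> \<le> t + real n * \<delta>"
      using \<delta> mult_right_mono[of "real k + 1" "real n" \<delta>] by (simp add: algebra_simps)
    then show "V (t + real (Suc k) * \<delta>) \<le> V (t + real k * \<delta>) * (1 - \<alpha> * \<delta>) + (\<gamma> * \<delta> + E * \<delta>\<^sup>2)"
      using step[of "t + real k * \<delta>" \<delta>] \<delta> end_point by (simp add: algebra_simps)
  qed
  then show ?thesis unfolding end_point by (simp add: B_def \<delta>_def)
qed

text \<open>Letting the mesh \<open>-t/n\<close> of the grid tend to \<open>0\<close> removes the second-order term \<open>E \<delta>\<^sup>2\<close>.\<close>

lemma le_max_of_one_step_decay: "V 0 \<le> max (V t) (\<gamma> / \<alpha>)"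
proof -
  have "(\<lambda>n. max (V t) ((\<gamma> + E * (- t / real n)) / \<alpha>)) \<longlonglongrightarrow> max (V t) ((\<gamma> + E * 0) / \<alpha>)"
    by (intro tendsto_intros lim_const_over_n) (use \<alpha> in auto)
  moreover have "\<forall>n\<ge>nat \<lceil>\<alpha> * (- t)\<rceil> + 1. V 0 \<le> max (V t) ((\<gamma> + E * (- t / real n)) / \<alpha>)"
  proof (intro allI impI one_step_decay_grid_bound)
    fix n assume n: "n \<ge> nat \<lceil>\<alpha> * (- t)\<rceil> + 1"
    then show "n > 0" by simp
    have "\<alpha> * (- t) \<le> real n" using n by linarith
    then show "\<alpha> * (- t / real n) \<le> 1" using \<open>n > 0\<close> by (simp add: field_simps)
  qed
  ultimately have "V 0 \<le> max (V t) ((\<gamma> + E * 0) / \<alpha>)" by (intro LIMSEQ_le_const) auto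
  then show ?thesis by simp
qed

end

section \<open>Linear differential equations with measurable coefficients\<close>

definition is_lin_ode_sol ::
  "(real \<Rightarrow> real^'n) \<Rightarrow> (real \<Rightarrow> real^'n^'n) \<Rightarrow> real \<Rightarrow> real^'n \<Rightarrow> (real \<Rightarrow> real^'n) \<Rightarrow> bool" where
  "is_lin_ode_sol b Am t y0 Y \<longleftrightarrow>
     (\<forall>\<tau>\<in>{t..0}. ((\<lambda>s. b s + Am s *v Y s) has_integral (Y \<tau> - y0)) {t..\<tau>})"

context
  fixes b :: "real \<Rightarrow> real^'n" and Am :: "real \<Rightarrow> real^'n^'n" and t :: real and y0 Y
  assumes sol: "is_lin_ode_sol b Am t y0 Y" and t: "t \<le> 0"
begin

lemma lin_ode_sol_eq_integral:
  assumes "s \<in> {t..0}"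
  shows "Y s = y0 + integral {t..s} (\<lambda>s. b s + Am s *v Y s)"
proof -
  have "((\<lambda>s. b s + Am s *v Y s) has_integral (Y s - y0)) {t..s}"
    using sol assms unfolding is_lin_ode_sol_def by blast
  then show ?thesis by (simp add: integral_unique)
qed

lemma lin_ode_sol_integrable: "(\<lambda>s. b s + Am s *v Y s) integrable_on {t..0}"
  using sol t unfolding is_lin_ode_sol_def by auto

lemma lin_ode_sol_continuous: "continuous_on {t..0} Y"
proof -
  have "continuous_on {t..0} (\<lambda>s. y0 + integral {t..s} (\<lambda>s. b s + Am s *v Y s))"
    by (intro continuous_intros indefinite_integral_continuous_1 lin_ode_sol_integrable)
  then show ?thesis
    by (rule continuous_on_eq) (simp add: lin_ode_sol_eq_integral)
qed

lemma lin_ode_sol_initial: "Y t = y0"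
  using lin_ode_sol_eq_integral[of t] t by simp

lemma lin_ode_sol_diff_eq_integral:
  assumes "t \<le> q" "q \<le> r" "r \<le> 0"
  shows "Y r - Y q = integral {q..r} (\<lambda>s. b s + Am s *v Y s)"
proof -
  have "(\<lambda>s. b s + Am s *v Y s) integrable_on {t..r}"
    using lin_ode_sol_integrable integrable_on_subinterval assms by fastforce
  then have "integral {t..q} (\<lambda>s. b s + Am s *v Y s) + integral {q..r} (\<lambda>s. b s + Am s *v Y s)
      = integral {t..r} (\<lambda>s. b s + Am s *v Y s)"
    using assms by (intro Henstock_Kurzweil_Integration.integral_combine) auto
  then show ?thesis using lin_ode_sol_eq_integral[of r] lin_ode_sol_eq_integral[of q] assms
    by (simp add: algebra_simps)
qed

end

primrec picard_iterate ::
  "(real \<Rightarrow> real^'n) \<Rightarrow> (real \<Rightarrow> real^'n^'n) \<Rightarrow> real \<Rightarrow> real^'n \<Rightarrow> nat \<Rightarrow> real \<Rightarrow> real^'n" where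
  "picard_iterate b Am t y0 0 = (\<lambda>\<tau>. y0)"
| "picard_iterate b Am t y0 (Suc k) =
     (\<lambda>\<tau>. y0 + integral {t..\<tau>} (\<lambda>s. b s + Am s *v picard_iterate b Am t y0 k s))"

locale linear_ode =
  fixes b :: "real \<Rightarrow> real^'n" and Am :: "real \<Rightarrow> real^'n^'n" and t Kb KA :: real
  assumes t_nonpos: "t \<le> 0"
    and b_measurable: "b measurable_on {t..0}" and Am_measurable: "Am measurable_on {t..0}"
    and b_bounded: "\<And>s. s \<in> {t..0} \<Longrightarrow> norm (b s) \<le> Kb"
    and Am_bounded: "\<And>s x. s \<in> {t..0} \<Longrightarrow> norm (Am s *v x) \<le> KA * norm x"
begin

lemma Kb_nonneg: "0 \<le> Kb"
  using b_bounded[of t] t_nonpos by (meson atLeastAtMost_iff norm_ge_zero order_refl order_trans)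

lemma KA_nonneg: "0 \<le> KA"
proof -
  obtain x :: "real^'n" where "norm x = 1" using vector_choose_size zero_le_one by blast
  then have "norm (Am t *v x) \<le> KA" using Am_bounded[of t x] t_nonpos by simp
  then show ?thesis by (meson norm_ge_zero order_trans)
qed

lemma integrable_on_Am_mult:
  assumes Z: "Z measurable_on {t..0}" and ZL: "\<And>s. s \<in> {t..0} \<Longrightarrow> norm (Z s) \<le> L"
    and sub: "{a..c} \<subseteq> {t..0}"
  shows "(\<lambda>s. Am s *v Z s) integrable_on {a..c}"
proof -
  have "(\<lambda>s. Am s *v Z s) integrable_on {t..0}"
  proof (rule measurable_bounded_integrable_on)
    show "(\<lambda>s. Am s *v Z s) measurable_on {t..0}"
      by (rule measurable_on_matrix_vector_mult[OF Am_measurable Z])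
    show "norm (Am s *v Z s) \<le> KA * L" if "s \<in> {t..0}" for s
      using Am_bounded[OF that, of "Z s"] ZL[OF that] KA_nonneg by (meson mult_left_mono order_trans)
  qed
  then show ?thesis using integrable_on_subinterval sub by blast
qed

lemma integrable_on_rhs:
  assumes Z: "Z measurable_on {t..0}" and ZL: "\<And>s. s \<in> {t..0} \<Longrightarrow> norm (Z s) \<le> L"
    and sub: "{a..c} \<subseteq> {t..0}"
  shows "(\<lambda>s. b s + Am s *v Z s) integrable_on {a..c}"
proof -
  have "b integrable_on {t..0}" by (rule measurable_bounded_integrable_on[OF b_measurable b_bounded])
  then have "b integrable_on {a..c}" using integrable_on_subinterval sub by blast
  then show ?thesis using integrable_on_Am_mult[OF assms] by (rule integrable_add)
qed

lemma integrable_on_rhs_continuous: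
  assumes "continuous_on {t..0} Z" "{a..c} \<subseteq> {t..0}"
  shows "(\<lambda>s. b s + Am s *v Z s) integrable_on {a..c}"
proof -
  obtain L where "\<And>s. s \<in> {t..0} \<Longrightarrow> norm (Z s) \<le> L"
    using bounded_on_interval_of_continuous[OF assms(1)] by blast
  then show ?thesis
    by (rule integrable_on_rhs[OF continuous_on_imp_measurable_on_interval[OF assms(1)] _ assms(2)])
qed

lemma norm_rhs_le:
  assumes "s \<in> {t..0}" "norm x \<le> L"
  shows "norm (b s + Am s *v x) \<le> Kb + KA * L"
proof -
  have "norm (b s + Am s *v x) \<le> norm (b s) + norm (Am s *v x)" by (rule norm_triangle_ineq)
  also have "\<dots> \<le> Kb + KA * norm x" using b_bounded[OF assms(1)] Am_bounded[OF assms(1)] by (rule add_mono)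
  also have "\<dots> \<le> Kb + KA * L" using assms(2) KA_nonneg by (simp add: mult_left_mono)
  finally show ?thesis .
qed

lemma norm_integral_Am_mult_le_power:
  assumes \<tau>: "\<tau> \<in> {t..0}" and W: "continuous_on {t..0} W"
    and Wk: "\<And>s. s \<in> {t..\<tau>} \<Longrightarrow> norm (W s) \<le> C * (KA * (s - t)) ^ k / fact k"
  shows "norm (integral {t..\<tau>} (\<lambda>s. Am s *v W s)) \<le> C * (KA * (\<tau> - t)) ^ Suc k / fact (Suc k)"
proof -
  have sub: "{t..\<tau>} \<subseteq> {t..0}" using \<tau> by auto
  obtain L where L: "\<And>s. s \<in> {t..0} \<Longrightarrow> norm (W s) \<le> L"
    using bounded_on_interval_of_continuous[OF W] by blast
  have pint: "((\<lambda>s. (C * KA ^ Suc k / fact k) * (s - t) ^ k) has_integral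
      (C * KA ^ Suc k / fact k) * ((\<tau> - t) ^ Suc k / real (Suc k))) {t..\<tau>}"
    by (rule has_integral_mult_right[OF has_integral_power_shift]) (use \<tau> in auto)
  have "norm (integral {t..\<tau>} (\<lambda>s. Am s *v W s))
      \<le> integral {t..\<tau>} (\<lambda>s. (C * KA ^ Suc k / fact k) * (s - t) ^ k)"
  proof (rule integral_norm_bound_integral)
    show "(\<lambda>s. Am s *v W s) integrable_on {t..\<tau>}"
      by (rule integrable_on_Am_mult[OF continuous_on_imp_measurable_on_interval[OF W] L sub])
    show "(\<lambda>s. (C * KA ^ Suc k / fact k) * (s - t) ^ k) integrable_on {t..\<tau>}"
      using pint by blast
    show "norm (Am s *v W s) \<le> (C * KA ^ Suc k / fact k) * (s - t) ^ k" if "s \<in> {t..\<tau>}" for s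
    proof -
      have "norm (Am s *v W s) \<le> KA * norm (W s)" using Am_bounded that sub by blast
      also have "\<dots> \<le> KA * (C * (KA * (s - t)) ^ k / fact k)"
        using Wk[OF that] KA_nonneg by (rule mult_left_mono)
      also have "\<dots> = (C * KA ^ Suc k / fact k) * (s - t) ^ k"
        unfolding power_mult_distrib by (simp add: field_simps)
      finally show ?thesis .
    qed
  qed
  also have "\<dots> = C * (KA * (\<tau> - t)) ^ Suc k / fact (Suc k)"
    unfolding integral_unique[OF pint] power_mult_distrib fact_Suc
    by (simp add: field_simps del: of_nat_Suc)
  finally show ?thesis .
qed

lemma lin_ode_sol_unique:
  assumes Y1: "is_lin_ode_sol b Am t y0 Y1" and Y2: "is_lin_ode_sol b Am t y0 Y2"
    and \<tau>0: "\<tau>0 \<in> {t..0}"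
  shows "Y1 \<tau>0 = Y2 \<tau>0"
proof -
  define W where "W = (\<lambda>s. Y1 s - Y2 s)"
  have W_eq: "W \<tau> = integral {t..\<tau>} (\<lambda>s. Am s *v W s)" if "\<tau> \<in> {t..0}" for \<tau>
  proof -
    have "((\<lambda>s. (b s + Am s *v Y1 s) - (b s + Am s *v Y2 s)) has_integral ((Y1 \<tau> - y0) - (Y2 \<tau> - y0))) {t..\<tau>}"
      using Y1 Y2 that unfolding is_lin_ode_sol_def by (intro has_integral_diff) auto
    then show ?thesis by (simp add: W_def matrix_vector_mult_diff_distrib integral_unique)
  qed
  have W: "continuous_on {t..0} W"
    unfolding W_def using Y1 Y2 t_nonpos by (intro continuous_intros lin_ode_sol_continuous)
  obtain L where L: "\<And>s. s \<in> {t..0} \<Longrightarrow> norm (W s) \<le> L"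
    using bounded_on_interval_of_continuous[OF W] by blast
  have bound: "\<forall>\<tau>\<in>{t..0}. norm (W \<tau>) \<le> L * (KA * (\<tau> - t)) ^ k / fact k" for k
  proof (induction k)
    case 0
    then show ?case using L by simp
  next
    case (Suc k)
    show ?case
    proof
      fix \<tau> assume \<tau>: "\<tau> \<in> {t..0}"
      have "norm (W \<tau>) = norm (integral {t..\<tau>} (\<lambda>s. Am s *v W s))" using W_eq[OF \<tau>] by simp
      also have "\<dots> \<le> L * (KA * (\<tau> - t)) ^ Suc k / fact (Suc k)"
        by (rule norm_integral_Am_mult_le_power[OF \<tau> W]) (use Suc \<tau> in auto)
      finally show "norm (W \<tau>) \<le> L * (KA * (\<tau> - t)) ^ Suc k / fact (Suc k)" .
    qed
  qed
  have "norm (W \<tau>0) \<le> 0"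
    by (rule LIMSEQ_le_const[OF exp_series_term_tendsto_zero[of L "KA * (\<tau>0 - t)"]])
       (use bound \<tau>0 in auto)
  then show ?thesis by (simp add: W_def)
qed

lemma picard_iterate_continuous: "continuous_on {t..0} (picard_iterate b Am t y0 k)"
proof (induction k)
  case (Suc k)
  have "(\<lambda>s. b s + Am s *v picard_iterate b Am t y0 k s) integrable_on {t..0}"
    by (rule integrable_on_rhs_continuous[OF Suc]) simp
  then show ?case by (simp, intro continuous_intros indefinite_integral_continuous_1)
qed simp

lemma picard_iterate_step_le:
  "\<tau> \<in> {t..0} \<Longrightarrow> norm (picard_iterate b Am t y0 (Suc k) \<tau> - picard_iterate b Am t y0 k \<tau>)
     \<le> ((Kb + KA * norm y0) * (- t)) * (KA * (\<tau> - t)) ^ k / fact k"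
proof (induction k arbitrary: \<tau>)
  case 0
  have "norm (integral {t..\<tau>} (\<lambda>s. b s + Am s *v y0)) \<le> integral {t..\<tau>} (\<lambda>s. Kb + KA * norm y0)"
  proof (rule integral_norm_bound_integral)
    show "(\<lambda>s. b s + Am s *v y0) integrable_on {t..\<tau>}"
      using integrable_on_rhs_continuous[of "\<lambda>_. y0"] 0 by auto
    show "norm (b s + Am s *v y0) \<le> Kb + KA * norm y0" if "s \<in> {t..\<tau>}" for s
      using that 0 by (intro norm_rhs_le) auto
  qed auto
  also have "\<dots> = (\<tau> - t) * (Kb + KA * norm y0)" using 0 by simp
  also have "\<dots> \<le> (- t) * (Kb + KA * norm y0)"
    using 0 KA_nonneg Kb_nonneg by (intro mult_right_mono) auto
  finally show ?case by (simp add: mult.commute)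
next
  case (Suc k)
  let ?p = "picard_iterate b Am t y0"
  have sub: "{t..\<tau>} \<subseteq> {t..0}" using Suc.prems by auto
  have "?p (Suc (Suc k)) \<tau> - ?p (Suc k) \<tau>
      = integral {t..\<tau>} (\<lambda>s. b s + Am s *v ?p (Suc k) s) - integral {t..\<tau>} (\<lambda>s. b s + Am s *v ?p k s)"
    by simp
  also have "\<dots> = integral {t..\<tau>} (\<lambda>s. Am s *v (?p (Suc k) s - ?p k s))"
    using integrable_on_rhs_continuous[OF picard_iterate_continuous sub, of y0 "Suc k"]
      integrable_on_rhs_continuous[OF picard_iterate_continuous sub, of y0 k]
    by (simp only: integral_diff[symmetric]) (simp add: matrix_vector_mult_diff_distrib)
  also have "norm \<dots> \<le> ((Kb + KA * norm y0) * (- t)) * (KA * (\<tau> - t)) ^ Suc k / fact (Suc k)"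
  proof (rule norm_integral_Am_mult_le_power[OF Suc.prems])
    show "continuous_on {t..0} (\<lambda>s. ?p (Suc k) s - ?p k s)"
      by (intro continuous_intros picard_iterate_continuous)
    show "norm (?p (Suc k) s - ?p k s) \<le> (Kb + KA * norm y0) * - t * (KA * (s - t)) ^ k / fact k"
      if "s \<in> {t..\<tau>}" for s
      using Suc.IH[of s] that Suc.prems by auto
  qed
  finally show ?case .
qed

lemma picard_iterate_converges:
  obtains Y L where
    "\<And>\<tau>. \<tau> \<in> {t..0} \<Longrightarrow> (\<lambda>k. picard_iterate b Am t y0 k \<tau>) \<longlonglongrightarrow> Y \<tau>"
    "\<And>k \<tau>. \<tau> \<in> {t..0} \<Longrightarrow> norm (picard_iterate b Am t y0 k \<tau>) \<le> L"
proof -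
  let ?p = "picard_iterate b Am t y0"
  define C0 where "C0 = (Kb + KA * norm y0) * (- t)"
  define e where "e = (\<lambda>j. C0 * (KA * (- t)) ^ j / fact j)"
  define dp where "dp = (\<lambda>\<tau> j. ?p (Suc j) \<tau> - ?p j \<tau>)"
  have C0: "0 \<le> C0" and KAt: "0 \<le> KA * (- t)"
    unfolding C0_def using KA_nonneg Kb_nonneg t_nonpos by (intro mult_nonneg_nonneg add_nonneg_nonneg; simp)+
  have e_nonneg: "0 \<le> e j" for j
    unfolding e_def using C0 KAt by simp
  have "summable (\<lambda>j. C0 * ((KA * (- t)) ^ j /\<^sub>R fact j))"
    by (rule summable_mult[OF summable_exp_generic])
  then have e_summable: "summable e"
    by (simp add: e_def field_simps)
  have dp_le: "norm (dp \<tau> j) \<le> e j" if \<tau>: "\<tau> \<in> {t..0}" for \<tau> j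
  proof -
    have "norm (dp \<tau> j) \<le> C0 * (KA * (\<tau> - t)) ^ j / fact j"
      using picard_iterate_step_le[OF \<tau>] by (simp add: C0_def dp_def)
    also have "\<dots> \<le> e j"
      unfolding e_def using \<tau> KA_nonneg C0
      by (intro divide_right_mono mult_left_mono power_mono) auto
    finally show ?thesis .
  qed
  have telescope: "?p k \<tau> = y0 + sum (dp \<tau>) {..<k}" for k \<tau>
    unfolding dp_def by (subst sum_lessThan_telescope[where f = "\<lambda>j. ?p j \<tau>"]) simp
  show ?thesis
  proof
    fix \<tau> assume \<tau>: "\<tau> \<in> {t..0}"
    have "summable (dp \<tau>)"
      by (rule summable_comparison_test[OF _ e_summable]) (use dp_le[OF \<tau>] in auto)
    then show "(\<lambda>k. ?p k \<tau>) \<longlonglongrightarrow> y0 + suminf (dp \<tau>)"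
      unfolding telescope by (intro tendsto_intros summable_LIMSEQ)
  next
    fix k \<tau> assume \<tau>: "\<tau> \<in> {t..0}"
    have "norm (sum (dp \<tau>) {..<k}) \<le> sum e {..<k}"
      using dp_le[OF \<tau>] by (intro sum_norm_le) auto
    also have "\<dots> \<le> suminf e"
      using e_summable e_nonneg by (intro sum_le_suminf) auto
    finally show "norm (?p k \<tau>) \<le> norm y0 + suminf e"
      unfolding telescope by (meson norm_triangle_le add_left_mono order_trans)
  qed
qed

lemma lin_ode_sol_exists: "\<exists>Y. is_lin_ode_sol b Am t y0 Y"
proof -
  let ?p = "picard_iterate b Am t y0"
  obtain Y L where conv: "\<And>\<tau>. \<tau> \<in> {t..0} \<Longrightarrow> (\<lambda>k. ?p k \<tau>) \<longlonglongrightarrow> Y \<tau>"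
    and bound: "\<And>k \<tau>. \<tau> \<in> {t..0} \<Longrightarrow> norm (?p k \<tau>) \<le> L"
    using picard_iterate_converges[of y0] by blast
  have "((\<lambda>s. b s + Am s *v Y s) has_integral (Y \<tau> - y0)) {t..\<tau>}" if \<tau>: "\<tau> \<in> {t..0}" for \<tau>
  proof -
    have sub: "{t..\<tau>} \<subseteq> {t..0}" using \<tau> by auto
    have integrable: "(\<lambda>s. b s + Am s *v ?p k s) integrable_on {t..\<tau>}" for k
      by (rule integrable_on_rhs_continuous[OF picard_iterate_continuous sub])
    have dominated: "norm (b s + Am s *v ?p k s) \<le> Kb + KA * L" if "s \<in> {t..\<tau>}" for k s
      using that sub bound by (intro norm_rhs_le) auto
    have "(\<lambda>k. b s + Am s *v ?p k s) \<longlonglongrightarrow> b s + Am s *v Y s" if "s \<in> {t..\<tau>}" for s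
      using conv[of s] that sub
      by (intro tendsto_add tendsto_const bounded_linear.tendsto[OF matrix_vector_mul_bounded_linear]) auto
    note lim = dominated_convergence[OF integrable integrable_const_ivl dominated this]
    have "(\<lambda>k. ?p (Suc k) \<tau>) \<longlonglongrightarrow> y0 + integral {t..\<tau>} (\<lambda>s. b s + Am s *v Y s)"
      unfolding picard_iterate.simps by (intro tendsto_add tendsto_const lim(2))
    then have "Y \<tau> = y0 + integral {t..\<tau>} (\<lambda>s. b s + Am s *v Y s)"
      by (rule LIMSEQ_unique[OF LIMSEQ_Suc[OF conv[OF \<tau>]]])
    then show ?thesis using integrable_integral[OF lim(1)] by simp
  qed
  then show ?thesis unfolding is_lin_ode_sol_def by blast
qed

lemma the_lin_ode_sol:
  "is_lin_ode_sol b Am t y0 (THE Y. is_lin_ode_sol b Am t y0 Y \<and> (\<forall>\<tau>. \<tau> \<notin> {t..0} \<longrightarrow> Y \<tau> = 0))"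
proof -
  obtain Y where Y: "is_lin_ode_sol b Am t y0 Y" using lin_ode_sol_exists by blast
  define Y0 where "Y0 = (\<lambda>\<tau>. if \<tau> \<in> {t..0} then Y \<tau> else 0)"
  have "is_lin_ode_sol b Am t y0 Y0"
    unfolding is_lin_ode_sol_def
  proof
    fix \<tau> assume \<tau>: "\<tau> \<in> {t..0}"
    have "((\<lambda>s. b s + Am s *v Y0 s) has_integral (Y \<tau> - y0)) {t..\<tau>}"
      using Y \<tau> unfolding is_lin_ode_sol_def
      by (subst has_integral_cong[where g = "\<lambda>s. b s + Am s *v Y s"]) (auto simp: Y0_def)
    then show "((\<lambda>s. b s + Am s *v Y0 s) has_integral (Y0 \<tau> - y0)) {t..\<tau>}"
      using \<tau> by (simp add: Y0_def)
  qed
  then have "\<exists>!Y. is_lin_ode_sol b Am t y0 Y \<and> (\<forall>\<tau>. \<tau> \<notin> {t..0} \<longrightarrow> Y \<tau> = 0)"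
  proof (intro ex1I[of _ Y0] conjI allI impI)
    fix Y' assume Y': "is_lin_ode_sol b Am t y0 Y' \<and> (\<forall>\<tau>. \<tau> \<notin> {t..0} \<longrightarrow> Y' \<tau> = 0)"
    show "Y' = Y0"
    proof
      fix \<tau>
      show "Y' \<tau> = Y0 \<tau>"
        using Y' lin_ode_sol_unique[OF _ \<open>is_lin_ode_sol b Am t y0 Y0\<close>, of Y' \<tau>]
        by (cases "\<tau> \<in> {t..0}") (auto simp: Y0_def)
    qed
  qed (auto simp: Y0_def)
  then show ?thesis by (rule theI'[THEN conjunct1])
qed

lemma lin_ode_sol_lipschitz:
  assumes Y: "is_lin_ode_sol b Am t y0 Y" and L: "\<And>s. s \<in> {t..0} \<Longrightarrow> norm (Y s) \<le> L"
    and qr: "t \<le> q" "q \<le> r" "r \<le> 0"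
  shows "norm (Y r - Y q) \<le> (Kb + KA * L) * (r - q)"
proof -
  have "norm (integral {q..r} (\<lambda>s. b s + Am s *v Y s)) \<le> integral {q..r} (\<lambda>_. Kb + KA * L)"
  proof (rule integral_norm_bound_integral)
    show "(\<lambda>s. b s + Am s *v Y s) integrable_on {q..r}"
      using lin_ode_sol_integrable[OF Y t_nonpos] integrable_on_subinterval qr by fastforce
    show "norm (b s + Am s *v Y s) \<le> Kb + KA * L" if "s \<in> {q..r}" for s
      using that qr L by (intro norm_rhs_le) auto
  qed auto
  then show ?thesis
    using lin_ode_sol_diff_eq_integral[OF Y t_nonpos qr] qr by (simp add: mult.commute)
qed

end

locale dissipative_lin_ode = linear_ode +
  fixes P :: "real^'n^'n" and c pP :: real
  assumes P_sym: "\<And>x y. x \<bullet> (P *v y) = y \<bullet> (P *v x)"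
    and dissipative: "\<And>s x. s \<in> {t..0} \<Longrightarrow> x \<bullet> (P *v (Am s *v x)) \<le> - c * (norm x)\<^sup>2"
    and c_pos: "c > 0"
    and P_bounded: "\<And>x y. \<bar>x \<bullet> (P *v y)\<bar> \<le> pP * norm x * norm y"
    and pP_pos: "pP > 0"
begin

lemma quadratic_form_add:
  "(x + d) \<bullet> (P *v (x + d)) = x \<bullet> (P *v x) + 2 * (x \<bullet> (P *v d)) + d \<bullet> (P *v d)"
  using P_sym[of d x] by (simp add: matrix_vector_right_distrib inner_add_left inner_add_right)

context
  fixes y0 Y L
  assumes Y: "is_lin_ode_sol b Am t y0 Y" and L: "\<And>s. s \<in> {t..0} \<Longrightarrow> norm (Y s) \<le> L"
    and L_nonneg: "0 \<le> L"
begin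

lemma inner_P_rhs_le:
  assumes s: "t \<le> s" "0 \<le> \<delta>" "s + \<delta> \<le> 0" and r: "r \<in> {s..s + \<delta>}"
  shows "Y s \<bullet> (P *v (b r + Am r *v Y r))
    \<le> pP * norm (Y s) * Kb - c * (norm (Y s))\<^sup>2 + pP * L * KA * (Kb + KA * L) * \<delta>"
proof -
  have rt: "r \<in> {t..0}" using r s by auto
  have "Y s \<bullet> (P *v b r) \<le> pP * norm (Y s) * norm (b r)"
    using P_bounded abs_le_D1 by blast
  also have "\<dots> \<le> pP * norm (Y s) * Kb"
    using b_bounded[OF rt] pP_pos by (intro mult_left_mono) auto
  finally have b_term: "Y s \<bullet> (P *v b r) \<le> pP * norm (Y s) * Kb" .
  have "norm (Y r - Y s) \<le> (Kb + KA * L) * (r - s)"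
    using lin_ode_sol_lipschitz[OF Y L] r s by auto
  also have "\<dots> \<le> (Kb + KA * L) * \<delta>"
    using r Kb_nonneg KA_nonneg L_nonneg by (intro mult_left_mono) auto
  finally have "norm (Am r *v (Y r - Y s)) \<le> KA * ((Kb + KA * L) * \<delta>)"
    using Am_bounded[OF rt] KA_nonneg by (meson mult_left_mono order_trans)
  then have "pP * norm (Y s) * norm (Am r *v (Y r - Y s)) \<le> pP * L * (KA * ((Kb + KA * L) * \<delta>))"
    using L[of s] s pP_pos L_nonneg by (intro mult_mono mult_left_mono) auto
  then have perturbation_term: "Y s \<bullet> (P *v (Am r *v (Y r - Y s))) \<le> pP * L * KA * (Kb + KA * L) * \<delta>"
    using abs_le_D1[OF P_bounded[of "Y s" "Am r *v (Y r - Y s)"]] by (simp add: mult_ac)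
  have "b r + Am r *v Y r = b r + Am r *v Y s + Am r *v (Y r - Y s)"
    by (simp add: matrix_vector_mult_diff_distrib)
  then show ?thesis
    using b_term dissipative[OF rt, of "Y s"] perturbation_term
    by (simp add: matrix_vector_right_distrib inner_add_right)
qed

lemma inner_P_increment_le:
  assumes s: "t \<le> s" "0 \<le> \<delta>" "s + \<delta> \<le> 0"
  shows "Y s \<bullet> (P *v (Y (s + \<delta>) - Y s))
    \<le> \<delta> * (pP * norm (Y s) * Kb - c * (norm (Y s))\<^sup>2 + pP * L * KA * (Kb + KA * L) * \<delta>)"
proof -
  let ?h = "\<lambda>r. b r + Am r *v Y r"
  have h_int: "?h integrable_on {s..s + \<delta>}"
    using lin_ode_sol_integrable[OF Y t_nonpos] integrable_on_subinterval s by fastforce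
  have lin: "bounded_linear (\<lambda>v. Y s \<bullet> (P *v v))"
    by (rule bounded_linear_compose[OF bounded_linear_inner_right matrix_vector_mul_bounded_linear])
  have "Y s \<bullet> (P *v (Y (s + \<delta>) - Y s)) = integral {s..s + \<delta>} (\<lambda>r. Y s \<bullet> (P *v ?h r))"
    using lin_ode_sol_diff_eq_integral[OF Y t_nonpos, of s "s + \<delta>"] integral_linear[OF h_int lin] s
    by (simp add: o_def)
  also have "\<dots> \<le> integral {s..s + \<delta>}
      (\<lambda>_. pP * norm (Y s) * Kb - c * (norm (Y s))\<^sup>2 + pP * L * KA * (Kb + KA * L) * \<delta>)"
    using integrable_linear[OF h_int lin] inner_P_rhs_le[OF s]
    by (intro integral_le) (auto simp: o_def)
  also have "\<dots> = \<delta> * (pP * norm (Y s) * Kb - c * (norm (Y s))\<^sup>2 + pP * L * KA * (Kb + KA * L) * \<delta>)"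
    using s by simp
  finally show ?thesis .
qed

lemma quadratic_form_step_le:
  assumes s: "t \<le> s" "0 \<le> \<delta>" "s + \<delta> \<le> 0"
  shows "Y (s + \<delta>) \<bullet> (P *v Y (s + \<delta>)) \<le> Y s \<bullet> (P *v Y s) * (1 - (c / pP) * \<delta>) + ((pP * Kb)\<^sup>2 / c) * \<delta>
     + (2 * pP * L * KA * (Kb + KA * L) + pP * (Kb + KA * L)\<^sup>2) * \<delta>\<^sup>2"
proof -
  define x where "x = Y s"
  define \<Delta> where "\<Delta> = Y (s + \<delta>) - x"
  define \<Lambda> where "\<Lambda> = Kb + KA * L"
  have \<Lambda>: "0 \<le> \<Lambda>" unfolding \<Lambda>_def using Kb_nonneg KA_nonneg L_nonneg by simp
  have increment: "x \<bullet> (P *v \<Delta>) \<le> \<delta> * (pP * norm x * Kb - c * (norm x)\<^sup>2 + pP * L * KA * \<Lambda> * \<delta>)"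
    unfolding x_def \<Delta>_def \<Lambda>_def by (rule inner_P_increment_le[OF s])
  have "norm \<Delta> \<le> \<Lambda> * \<delta>"
    unfolding \<Delta>_def x_def \<Lambda>_def using lin_ode_sol_lipschitz[OF Y L, of s "s + \<delta>"] s by auto
  then have "pP * norm \<Delta> * norm \<Delta> \<le> pP * (\<Lambda> * \<delta>) * (\<Lambda> * \<delta>)"
    using pP_pos \<Lambda> s(2) by (intro mult_mono mult_left_mono mult_nonneg_nonneg) auto
  then have "\<Delta> \<bullet> (P *v \<Delta>) \<le> pP * (\<Lambda> * \<delta>) * (\<Lambda> * \<delta>)"
    using abs_le_D1[OF P_bounded[of \<Delta> \<Delta>]] by linarith
  then have second_order: "\<Delta> \<bullet> (P *v \<Delta>) \<le> pP * \<Lambda>\<^sup>2 * \<delta>\<^sup>2"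
    by (simp add: power2_eq_square mult_ac)
  have am_gm: "2 * (pP * norm x * Kb - c * (norm x)\<^sup>2) \<le> (pP * Kb)\<^sup>2 / c - c * (norm x)\<^sup>2"
    using twice_mult_sub_le[OF c_pos, of "pP * Kb" "norm x"] by (simp add: mult_ac)
  have "(c / pP) * (x \<bullet> (P *v x)) \<le> (c / pP) * (pP * (norm x)\<^sup>2)"
    using abs_le_D1[OF P_bounded[of x x]] c_pos pP_pos
    by (intro mult_left_mono) (auto simp: power2_eq_square mult_ac)
  then have coercive: "- c * (norm x)\<^sup>2 \<le> - (c / pP) * (x \<bullet> (P *v x))"
    using pP_pos by simp
  have "Y (s + \<delta>) \<bullet> (P *v Y (s + \<delta>)) = x \<bullet> (P *v x) + 2 * (x \<bullet> (P *v \<Delta>)) + \<Delta> \<bullet> (P *v \<Delta>)"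
    unfolding \<Delta>_def by (simp flip: quadratic_form_add)
  also have "\<dots> \<le> x \<bullet> (P *v x) + \<delta> * (2 * (pP * norm x * Kb - c * (norm x)\<^sup>2))
      + 2 * pP * L * KA * \<Lambda> * \<delta>\<^sup>2 + pP * \<Lambda>\<^sup>2 * \<delta>\<^sup>2"
    using increment second_order by (simp add: algebra_simps power2_eq_square)
  also have "\<dots> \<le> x \<bullet> (P *v x) + \<delta> * ((pP * Kb)\<^sup>2 / c - (c / pP) * (x \<bullet> (P *v x)))
      + 2 * pP * L * KA * \<Lambda> * \<delta>\<^sup>2 + pP * \<Lambda>\<^sup>2 * \<delta>\<^sup>2"
    using am_gm coercive s by (intro add_mono mult_left_mono order_refl) auto
  finally show ?thesis by (simp add: x_def \<Lambda>_def algebra_simps)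
qed

end

lemma lyapunov_bound:
  assumes Y: "is_lin_ode_sol b Am t y0 Y"
  shows "Y 0 \<bullet> (P *v Y 0) \<le> max (y0 \<bullet> (P *v y0)) (((pP * Kb)\<^sup>2 / c) / (c / pP))"
proof -
  obtain L0 where L0: "\<And>s. s \<in> {t..0} \<Longrightarrow> norm (Y s) \<le> L0"
    using bounded_on_interval_of_continuous[OF lin_ode_sol_continuous[OF Y t_nonpos]] by blast
  have L: "\<And>s. s \<in> {t..0} \<Longrightarrow> norm (Y s) \<le> max L0 0"
    using L0 by (meson max.coboundedI1)
  have "0 < c / pP" using c_pos pP_pos by simp
  from le_max_of_one_step_decay[where V = "\<lambda>s. Y s \<bullet> (P *v Y s)", OF t_nonpos this
      quadratic_form_step_le[OF Y L]]
  have "Y 0 \<bullet> (P *v Y 0) \<le> max (Y t \<bullet> (P *v Y t)) (((pP * Kb)\<^sup>2 / c) / (c / pP))"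
    by simp
  then show ?thesis using lin_ode_sol_initial[OF Y t_nonpos] by simp
qed

end

section \<open>Upper and lower values of the discretised game\<close>

lemma admissible_empty: "h \<in> admissible S a a"
proof -
  have "(\<lambda>x. if x \<in> {a..<a} then h x else 0) measurable_on UNIV" by simp
  then have "h measurable_on {a..<a}" by (simp only: measurable_on_UNIV)
  then show ?thesis unfolding admissible_def by simp
qed

lemma const_admissible: "c \<in> S \<Longrightarrow> (\<lambda>_. c) \<in> admissible S a b"
  unfolding admissible_def by simp

lemma admissible_nonempty: "S \<noteq> {} \<Longrightarrow> admissible S a b \<noteq> {}"
  using const_admissible by blast

lemma glue_admissible:
  assumes acc: "acc \<in> admissible S t a" and v: "v \<in> admissible S a b" and "t \<le> a" "a \<le> b"
  shows "glue a b v acc \<in> admissible S t b"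
proof -
  have "(\<lambda>x. if x \<in> {t..<a} then acc x else 0) measurable_on UNIV"
    "(\<lambda>x. if x \<in> {a..<b} then v x else 0) measurable_on UNIV"
    using acc v measurable_on_UNIV unfolding admissible_def by blast+
  then have "(\<lambda>x. (if x \<in> {t..<a} then acc x else 0) + (if x \<in> {a..<b} then v x else 0)) measurable_on UNIV"
    by (rule measurable_on_add)
  moreover have "(\<lambda>x. (if x \<in> {t..<a} then acc x else 0) + (if x \<in> {a..<b} then v x else 0))
      = (\<lambda>x. if x \<in> {t..<b} then glue a b v acc x else 0)"
    using assms by (intro ext) (auto simp: glue_def)
  ultimately have "glue a b v acc measurable_on {t..<b}"
    using measurable_on_UNIV by metis
  then show ?thesis using acc v unfolding admissible_def glue_def by auto
qed

lemma admissible_extend_right: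
  fixes u :: "real \<Rightarrow> 'a::euclidean_space"
  assumes u: "u \<in> admissible S t e" and c: "c \<in> S"
  shows "(\<lambda>s. if s < e then u s else c) measurable_on {t..e}"
    and "\<And>s. s \<in> {t..e} \<Longrightarrow> (if s < e then u s else c) \<in> S"
proof -
  have "u measurable_on {t..<e}" using u by (simp add: admissible_def)
  moreover have "negligible (({t..<e} - {t..e}) \<union> ({t..e} - {t..<e}))"
    by (rule negligible_subset[of "{e}"]) auto
  ultimately have "u measurable_on {t..e}" by (rule measurable_on_spike_set)
  then show "(\<lambda>s. if s < e then u s else c) measurable_on {t..e}"
    by (rule measurable_on_spike[of _ _ "{e}"]) auto
  show "(if s < e then u s else c) \<in> S" if "s \<in> {t..e}" for s
    using u c that by (auto simp: admissible_def)
qed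

lemma real_INF_eq_uminus_SUP: "(INF x\<in>X. f x) = - (SUP x\<in>X. - f x :: real)"
  \<comment> \<open>No boundedness hypothesis: \<open>Inf\<close> on \<open>real\<close> is defined as \<open>- Sup (uminus ` X)\<close>.\<close>
  by (simp add: Inf_real_def image_image)

lemma bdd_below_image_of_abs_le:
  fixes f :: "'a \<Rightarrow> real"
  assumes "\<And>x. x \<in> X \<Longrightarrow> \<bar>f x\<bar> \<le> B"
  shows "bdd_below (f ` X)"
proof (rule bdd_belowI[of _ "- B"])
  fix y assume "y \<in> f ` X"
  then obtain x where "x \<in> X" "y = f x" by blast
  then show "- B \<le> y" using assms[of x] by linarith
qed

lemma bdd_above_image_of_abs_le:
  fixes f :: "'a \<Rightarrow> real"
  assumes "\<And>x. x \<in> X \<Longrightarrow> \<bar>f x\<bar> \<le> B"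
  shows "bdd_above (f ` X)"
proof (rule bdd_aboveI[of _ B])
  fix y assume "y \<in> f ` X"
  then obtain x where "x \<in> X" "y = f x" by blast
  then show "y \<le> B" using assms[of x] by linarith
qed

lemma abs_SUP_le:
  fixes f :: "'a \<Rightarrow> real"
  assumes "X \<noteq> {}" "\<And>x. x \<in> X \<Longrightarrow> \<bar>f x\<bar> \<le> B"
  shows "\<bar>SUP x\<in>X. f x\<bar> \<le> B"
proof -
  obtain x0 where x0: "x0 \<in> X" using assms by blast
  have "bdd_above (f ` X)" using assms(2) by (rule bdd_above_image_of_abs_le)
  then have "f x0 \<le> (SUP x\<in>X. f x)" by (rule cSUP_upper[OF x0])
  moreover have "(SUP x\<in>X. f x) \<le> B" using assms by (intro cSUP_least) force+
  ultimately show ?thesis using assms(2)[OF x0] by linarith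
qed

lemma abs_INF_le:
  fixes f :: "'a \<Rightarrow> real"
  assumes "X \<noteq> {}" "\<And>x. x \<in> X \<Longrightarrow> \<bar>f x\<bar> \<le> B"
  shows "\<bar>INF x\<in>X. f x\<bar> \<le> B"
  using abs_SUP_le[of X "\<lambda>x. - f x" B] assms by (simp add: real_INF_eq_uminus_SUP)

lemma vminus_eq_uminus_vplus_swap:
  "vminus U D J a bs uacc dacc = - vplus D U (\<lambda>d u. - J u d) a bs dacc uacc"
  by (induction bs arbitrary: a uacc dacc) (simp_all add: real_INF_eq_uminus_SUP)

lemma vplus_eq_uminus_vminus_swap:
  "vplus U D J a bs uacc dacc = - vminus D U (\<lambda>d u. - J u d) a bs dacc uacc"
  by (simp add: vminus_eq_uminus_vplus_swap)

locale bounded_payoff =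
  fixes U :: "'a::euclidean_space set" and D :: "'b::euclidean_space set"
    and J :: "(real \<Rightarrow> 'a) \<Rightarrow> (real \<Rightarrow> 'b) \<Rightarrow> real" and t B :: real
  assumes U_nonempty: "U \<noteq> {}" and D_nonempty: "D \<noteq> {}"
    and J_bounded: "\<And>u d. u \<in> admissible U t 0 \<Longrightarrow> d \<in> admissible D t 0 \<Longrightarrow> \<bar>J u d\<bar> \<le> B"
begin

lemma abs_vplus_le:
  "sorted_wrt (<) (a # bs) \<Longrightarrow> last (a # bs) = 0 \<Longrightarrow> t \<le> a \<Longrightarrow>
    uacc \<in> admissible U t a \<Longrightarrow> dacc \<in> admissible D t a \<Longrightarrow> \<bar>vplus U D J a bs uacc dacc\<bar> \<le> B"
proof (induction bs arbitrary: a uacc dacc)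
  case Nil
  then show ?case using J_bounded by simp
next
  case (Cons b bs)
  then have "\<bar>vplus U D J b bs (glue a b u uacc) (glue a b d dacc)\<bar> \<le> B"
    if "u \<in> admissible U a b" "d \<in> admissible D a b" for u d
    using that by (intro Cons.IH glue_admissible) auto
  then show ?case
    using admissible_nonempty[OF U_nonempty] admissible_nonempty[OF D_nonempty]
    by (auto intro!: abs_SUP_le abs_INF_le)
qed

lemma abs_vminus_le:
  assumes "sorted_wrt (<) (a # bs)" "last (a # bs) = 0" "t \<le> a"
    and "uacc \<in> admissible U t a" "dacc \<in> admissible D t a"
  shows "\<bar>vminus U D J a bs uacc dacc\<bar> \<le> B"
proof -
  interpret swapped: bounded_payoff D U "\<lambda>d u. - J u d" t B
    using U_nonempty D_nonempty J_bounded by unfold_locales auto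
  show ?thesis
    unfolding vminus_eq_uminus_vplus_swap abs_minus_cancel by (rule swapped.abs_vplus_le) fact+
qed

lemma vplus_le_of_const_control:
  assumes u1: "u1 \<in> U"
    and J_le: "\<And>u d. u \<in> admissible U t 0 \<Longrightarrow> \<forall>s\<in>{t..<0}. u s = u1 \<Longrightarrow> d \<in> admissible D t 0 \<Longrightarrow> J u d \<le> C"
  shows "sorted_wrt (<) (a # bs) \<Longrightarrow> last (a # bs) = 0 \<Longrightarrow> t \<le> a \<Longrightarrow> uacc \<in> admissible U t a \<Longrightarrow>
    \<forall>s\<in>{t..<a}. uacc s = u1 \<Longrightarrow> dacc \<in> admissible D t a \<Longrightarrow> vplus U D J a bs uacc dacc \<le> C"
proof (induction bs arbitrary: a uacc dacc)
  case Nil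
  then show ?case using J_le by simp
next
  case (Cons b bs)
  let ?V = "\<lambda>u d. vplus U D J b bs (glue a b u uacc) (glue a b d dacc)"
  have ab: "a < b" using Cons.prems by simp
  have c1: "(\<lambda>_. u1) \<in> admissible U a b" by (rule const_admissible[OF u1])
  have "\<bar>SUP d\<in>admissible D a b. ?V u d\<bar> \<le> B" if "u \<in> admissible U a b" for u
    using Cons.prems ab that admissible_nonempty[OF D_nonempty]
    by (intro abs_SUP_le abs_vplus_le glue_admissible) auto
  then have "bdd_below ((\<lambda>u. SUP d\<in>admissible D a b. ?V u d) ` admissible U a b)"
    by (rule bdd_below_image_of_abs_le)
  then have "vplus U D J a (b # bs) uacc dacc \<le> (SUP d\<in>admissible D a b. ?V (\<lambda>_. u1) d)"
    unfolding vplus.simps by (rule cINF_lower[OF _ c1])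
  also have "\<dots> \<le> C"
    using Cons.prems ab c1 admissible_nonempty[OF D_nonempty]
    by (intro cSUP_least Cons.IH glue_admissible) (auto simp: glue_def)
  finally show ?case .
qed

lemma vminus_le_of_const_control:
  assumes u1: "u1 \<in> U"
    and J_le: "\<And>u d. u \<in> admissible U t 0 \<Longrightarrow> \<forall>s\<in>{t..<0}. u s = u1 \<Longrightarrow> d \<in> admissible D t 0 \<Longrightarrow> J u d \<le> C"
  shows "sorted_wrt (<) (a # bs) \<Longrightarrow> last (a # bs) = 0 \<Longrightarrow> t \<le> a \<Longrightarrow> uacc \<in> admissible U t a \<Longrightarrow>
    \<forall>s\<in>{t..<a}. uacc s = u1 \<Longrightarrow> dacc \<in> admissible D t a \<Longrightarrow> vminus U D J a bs uacc dacc \<le> C"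
proof (induction bs arbitrary: a uacc dacc)
  case Nil
  then show ?case using J_le by simp
next
  case (Cons b bs)
  let ?V = "\<lambda>u d. vminus U D J b bs (glue a b u uacc) (glue a b d dacc)"
  have ab: "a < b" using Cons.prems by simp
  have c1: "(\<lambda>_. u1) \<in> admissible U a b" by (rule const_admissible[OF u1])
  have "(INF u\<in>admissible U a b. ?V u d) \<le> C" if d: "d \<in> admissible D a b" for d
  proof -
    have "\<bar>?V u d\<bar> \<le> B" if "u \<in> admissible U a b" for u
      using Cons.prems ab d that by (intro abs_vminus_le glue_admissible) auto
    then have "bdd_below ((\<lambda>u. ?V u d) ` admissible U a b)"
      by (rule bdd_below_image_of_abs_le)
    then have "(INF u\<in>admissible U a b. ?V u d) \<le> ?V (\<lambda>_. u1) d"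
      by (rule cINF_lower[OF _ c1])
    also have "\<dots> \<le> C"
      using Cons.prems ab c1 d by (intro Cons.IH glue_admissible) (auto simp: glue_def)
    finally show ?thesis .
  qed
  then show ?case
    using admissible_nonempty[OF D_nonempty] by (simp add: cSUP_least)
qed

end

context
  fixes U :: "'a::euclidean_space set" and D :: "'b::euclidean_space set"
    and \<phi> :: "'a \<Rightarrow> 'b \<Rightarrow> real" and J :: "(real \<Rightarrow> 'a) \<Rightarrow> (real \<Rightarrow> 'b) \<Rightarrow> real" and K t \<beta> :: real
  assumes U_nonempty: "U \<noteq> {}" and D_nonempty: "D \<noteq> {}"
    and \<phi>_bounded: "\<And>u d. u \<in> U \<Longrightarrow> d \<in> D \<Longrightarrow> \<bar>\<phi> u d\<bar> \<le> K"
    and t: "t < 0"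
    and J_near_average: "\<And>u d. u \<in> admissible U t 0 \<Longrightarrow> d \<in> admissible D t 0 \<Longrightarrow>
          (\<lambda>s. \<phi> (u s) (d s)) integrable_on {t..0} \<and>
          \<bar>J u d - integral {t..0} (\<lambda>s. \<phi> (u s) (d s)) / \<bar>t\<bar>\<bar> \<le> \<beta> / \<bar>t\<bar>"
begin

lemma payoff_le_of_running_payoff_le:
  assumes u: "u \<in> admissible U t 0" and d: "d \<in> admissible D t 0"
    and le: "\<And>s. s \<in> {t..<0} \<Longrightarrow> \<phi> (u s) (d s) \<le> C"
  shows "J u d \<le> C + \<beta> / \<bar>t\<bar>"
proof -
  have "integral {t..0} (\<lambda>s. \<phi> (u s) (d s)) \<le> C * (0 - t)"
    using J_near_average[OF u d] t le by (intro integral_le_half_open) auto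
  then have "integral {t..0} (\<lambda>s. \<phi> (u s) (d s)) / \<bar>t\<bar> \<le> C"
    using t by (subst pos_divide_le_eq) auto
  then show ?thesis using J_near_average[OF u d] by (simp add: abs_le_iff)
qed

lemma abs_payoff_le:
  assumes u: "u \<in> admissible U t 0" and d: "d \<in> admissible D t 0"
  shows "\<bar>J u d\<bar> \<le> K + \<beta> / \<bar>t\<bar>"
proof -
  have "\<bar>integral {t..0} (\<lambda>s. \<phi> (u s) (d s))\<bar> \<le> K * (0 - t)"
    using J_near_average[OF u d] t u d \<phi>_bounded
    by (intro abs_integral_le_half_open) (auto simp: admissible_def)
  then have "\<bar>integral {t..0} (\<lambda>s. \<phi> (u s) (d s)) / \<bar>t\<bar>\<bar> \<le> K"
    using t by (subst abs_divide, subst pos_divide_le_eq) auto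
  then show ?thesis using J_near_average[OF u d] by (simp only: abs_le_iff) linarith
qed

lemma game_values_le_INF_SUP:
  assumes part: "is_partition t ts"
  shows "vplus U D J t ts uacc dacc \<le> (INF u\<in>U. SUP d\<in>D. \<phi> u d) + \<beta> / \<bar>t\<bar>"
    and "vminus U D J t ts uacc dacc \<le> (INF u\<in>U. SUP d\<in>D. \<phi> u d) + \<beta> / \<bar>t\<bar>"
proof -
  interpret bounded_payoff U D J t "K + \<beta> / \<bar>t\<bar>"
    using U_nonempty D_nonempty abs_payoff_le by unfold_locales auto
  let ?H = "INF u\<in>U. SUP d\<in>D. \<phi> u d"
  have sup_bounded: "\<bar>SUP d\<in>D. \<phi> u d\<bar> \<le> K" if "u \<in> U" for u
    using D_nonempty \<phi>_bounded that by (intro abs_SUP_le) auto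
  have partition: "sorted_wrt (<) (t # ts)" "last (t # ts) = 0"
    using part unfolding is_partition_def by auto
  have "vplus U D J t ts uacc dacc \<le> ?H + \<beta> / \<bar>t\<bar> + \<epsilon> \<and> vminus U D J t ts uacc dacc \<le> ?H + \<beta> / \<bar>t\<bar> + \<epsilon>"
    if \<epsilon>: "\<epsilon> > 0" for \<epsilon>
  proof -
    have "bdd_below ((\<lambda>u. SUP d\<in>D. \<phi> u d) ` U)"
      by (rule bdd_below_image_of_abs_le[OF sup_bounded])
    moreover have "?H < ?H + \<epsilon>" using \<epsilon> by simp
    ultimately obtain u1 where u1: "u1 \<in> U" and "(SUP d\<in>D. \<phi> u1 d) < ?H + \<epsilon>"
      using cINF_less_iff[OF U_nonempty] by blast
    moreover have "\<phi> u1 d \<le> (SUP d\<in>D. \<phi> u1 d)" if "d \<in> D" for d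
      by (rule cSUP_upper[OF that bdd_above_image_of_abs_le]) (rule \<phi>_bounded[OF u1])
    ultimately have \<phi>_u1: "\<phi> u1 d \<le> ?H + \<epsilon>" if "d \<in> D" for d
      using that by fastforce
    have J_le: "J u d \<le> ?H + \<beta> / \<bar>t\<bar> + \<epsilon>"
      if "u \<in> admissible U t 0" "\<forall>s\<in>{t..<0}. u s = u1" "d \<in> admissible D t 0" for u d
      using payoff_le_of_running_payoff_le[OF that(1,3), of "?H + \<epsilon>"] that \<phi>_u1
      by (auto simp: admissible_def)
    show ?thesis
      using vplus_le_of_const_control[OF u1 J_le] vminus_le_of_const_control[OF u1 J_le] partition
      by (simp add: admissible_empty)
  qed
  then show "vplus U D J t ts uacc dacc \<le> ?H + \<beta> / \<bar>t\<bar>" "vminus U D J t ts uacc dacc \<le> ?H + \<beta> / \<bar>t\<bar>"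
    by (auto intro: field_le_epsilon)
qed

end

lemma game_values_ge_SUP_INF:
  fixes U :: "'a::euclidean_space set" and D :: "'b::euclidean_space set"
  assumes "U \<noteq> {}" "D \<noteq> {}" "\<And>u d. u \<in> U \<Longrightarrow> d \<in> D \<Longrightarrow> \<bar>\<phi> u d\<bar> \<le> K" "t < 0"
    and "\<And>u d. u \<in> admissible U t 0 \<Longrightarrow> d \<in> admissible D t 0 \<Longrightarrow>
          (\<lambda>s. \<phi> (u s) (d s)) integrable_on {t..0} \<and>
          \<bar>J u d - integral {t..0} (\<lambda>s. \<phi> (u s) (d s)) / \<bar>t\<bar>\<bar> \<le> \<beta> / \<bar>t\<bar>"
    and "is_partition t ts"
  shows "(SUP d\<in>D. INF u\<in>U. \<phi> u d) - \<beta> / \<bar>t\<bar> \<le> vplus U D J t ts uacc dacc"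
    and "(SUP d\<in>D. INF u\<in>U. \<phi> u d) - \<beta> / \<bar>t\<bar> \<le> vminus U D J t ts uacc dacc"
proof -
  have swapped_near_average: "(\<lambda>s. - \<phi> (u s) (d s)) integrable_on {t..0} \<and>
      \<bar>- J u d - integral {t..0} (\<lambda>s. - \<phi> (u s) (d s)) / \<bar>t\<bar>\<bar> \<le> \<beta> / \<bar>t\<bar>"
    if "d \<in> admissible D t 0" "u \<in> admissible U t 0" for d u
    using assms(5)[OF that(2,1)] by (simp add: integrable_neg_iff abs_minus_commute)
  have swapped_bounded: "\<bar>- \<phi> u d\<bar> \<le> K" if "d \<in> D" "u \<in> U" for d u
    using assms(3) that by simp
  note swapped = game_values_le_INF_SUP[where U = D and D = U and \<phi> = "\<lambda>d u. - \<phi> u d"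
      and J = "\<lambda>d u. - J u d", OF assms(2,1) swapped_bounded assms(4) swapped_near_average assms(6)]
  show "(SUP d\<in>D. INF u\<in>U. \<phi> u d) - \<beta> / \<bar>t\<bar> \<le> vplus U D J t ts uacc dacc"
    using swapped(2)[where uacc = dacc and dacc = uacc]
    by (simp add: vplus_eq_uminus_vminus_swap real_INF_eq_uminus_SUP)
  show "(SUP d\<in>D. INF u\<in>U. \<phi> u d) - \<beta> / \<bar>t\<bar> \<le> vminus U D J t ts uacc dacc"
    using swapped(1)[where uacc = dacc and dacc = uacc]
    by (simp add: vminus_eq_uminus_vplus_swap real_INF_eq_uminus_SUP)
qed

section \<open>Stable linear systems driven by two measurable controls\<close>

lemma quadratic_form_uniformly_negative:
  fixes Q :: "'p::topological_space \<Rightarrow> 'a::euclidean_space \<Rightarrow> real"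
  assumes K: "compact K" "K \<noteq> {}"
    and cont: "continuous_on (K \<times> sphere 0 1) (\<lambda>q. Q (fst q) (snd q))"
    and hom: "\<And>p x r. p \<in> K \<Longrightarrow> Q p (r *\<^sub>R x) = r\<^sup>2 * Q p x"
    and neg: "\<And>p x. p \<in> K \<Longrightarrow> x \<noteq> 0 \<Longrightarrow> Q p x < 0"
  obtains c where "c > 0" "\<And>p x. p \<in> K \<Longrightarrow> Q p x \<le> - c * (norm x)\<^sup>2"
proof -
  obtain e :: 'a where "e \<in> Basis" using nonempty_Basis by blast
  then have "e \<in> sphere 0 1" by (simp add: norm_Basis)
  then have ne: "K \<times> sphere (0::'a) 1 \<noteq> {}" using K(2) by blast
  have cp: "compact (K \<times> sphere (0::'a) 1)" using K by (intro compact_Times compact_sphere)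
  \<comment> \<open>The maximum of \<open>Q\<close> over \<open>K \<times> sphere 0 1\<close> is negative and bounds \<open>Q\<close> by homogeneity.\<close>
  obtain q0 where q0: "q0 \<in> K \<times> sphere 0 1"
    and max: "\<And>q. q \<in> K \<times> sphere 0 1 \<Longrightarrow> Q (fst q) (snd q) \<le> Q (fst q0) (snd q0)"
    using continuous_attains_sup[OF cp ne cont] by blast
  define c where "c = - Q (fst q0) (snd q0)"
  have "snd q0 \<noteq> 0" "fst q0 \<in> K" using q0 by (auto simp: mem_Times_iff)
  then have c: "c > 0" unfolding c_def using neg[of "fst q0" "snd q0"] by simp
  have "Q p x \<le> - c * (norm x)\<^sup>2" if p: "p \<in> K" for p x
  proof (cases "x = 0")
    case True
    then show ?thesis using hom[OF p, of 0 x] by simp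
  next
    case False
    define w where "w = x /\<^sub>R norm x"
    have w: "(p, w) \<in> K \<times> sphere 0 1" using p False by (simp add: w_def)
    have "Q p x = (norm x)\<^sup>2 * Q p w"
      using hom[OF p, of "norm x" w] False by (simp add: w_def)
    also have "\<dots> \<le> (norm x)\<^sup>2 * (- c)" using max[OF w] by (intro mult_left_mono) (auto simp: c_def)
    finally show ?thesis by (simp add: mult.commute)
  qed
  with c show ?thesis using that by blast
qed

lemma inner_matrix_vector_sym:
  fixes P :: "real^'n^'n"
  assumes "transpose P = P"
  shows "x \<bullet> (P *v y) = y \<bullet> (P *v x)"
proof -
  have "x \<bullet> (P *v y) = (transpose P *v x) \<bullet> y" by (simp add: dot_lmul_matrix)
  then show ?thesis using assms by (simp add: inner_commute)
qed

lemma negdef_lyapunov_inner_neg: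
  fixes P A :: "real^'n^'n"
  assumes P: "transpose P = P" and neg: "negdef (transpose A ** P + P ** A)" and x: "x \<noteq> 0"
  shows "x \<bullet> (P *v (A *v x)) < 0"
proof -
  have "x \<bullet> (transpose A *v (P *v x)) = (x v* transpose A) \<bullet> (P *v x)"
    by (simp only: dot_lmul_matrix)
  also have "x v* transpose A = A *v x" by (rule vector_transpose_matrix)
  finally have "x \<bullet> (transpose A *v (P *v x)) = x \<bullet> (P *v (A *v x))"
    using inner_matrix_vector_sym[OF P] by simp
  then have "x \<bullet> ((transpose A ** P + P ** A) *v x) = 2 * (x \<bullet> (P *v (A *v x)))"
    by (simp add: matrix_vector_mult_add_rdistrib matrix_vector_mul_assoc inner_add_right)
  then show ?thesis using neg x unfolding negdef_def by fastforce
qed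

lemma bounded_on_compact_Times:
  fixes F :: "'u::topological_space \<Rightarrow> 'd::topological_space \<Rightarrow> 'b::real_normed_vector"
  assumes "compact U" "compact D" "continuous_on (U \<times> D) (\<lambda>(u, d). F u d)"
  obtains K where "K \<ge> 0" "\<And>u d. u \<in> U \<Longrightarrow> d \<in> D \<Longrightarrow> norm (F u d) \<le> K"
proof -
  have "compact ((\<lambda>(u, d). F u d) ` (U \<times> D))"
    using assms by (intro compact_continuous_image compact_Times)
  then obtain K where "\<forall>x\<in>(\<lambda>(u, d). F u d) ` (U \<times> D). norm x \<le> K"
    by (meson bounded_iff compact_imp_bounded)
  then show ?thesis using that[of "max K 0"] by force
qed

lemma measurable_on_compose_controls:
  fixes u :: "real \<Rightarrow> 'u::euclidean_space" and d :: "real \<Rightarrow> 'd::euclidean_space"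
    and F :: "'u \<times> 'd \<Rightarrow> 'c::euclidean_space"
  assumes "compact U" "compact D" "continuous_on (U \<times> D) F"
    and "u measurable_on {a..b}" "d measurable_on {a..b}" "\<And>s. s \<in> {a..b} \<Longrightarrow> u s \<in> U \<and> d s \<in> D"
  shows "(\<lambda>s. F (u s, d s)) measurable_on {a..b}"
proof (rule measurable_on_compose_continuous_on_closed[where C = "U \<times> D"])
  show "(\<lambda>s. (u s, d s)) measurable_on {a..b}" using assms(4,5) by (rule measurable_on_Pair)
  show "closed (U \<times> D)" using assms(1,2) by (intro closed_Times compact_imp_closed)
qed (use assms in auto)

locale stable_linear_system =
  fixes U :: "'u::euclidean_space set" and D :: "'d::euclidean_space set"
    and b :: "'u \<Rightarrow> 'd \<Rightarrow> real^'n" and Am :: "'u \<Rightarrow> 'd \<Rightarrow> real^'n^'n"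
  assumes U: "compact U" "U \<noteq> {}" and D: "compact D" "D \<noteq> {}"
    and b_cont: "continuous_on (U \<times> D) (\<lambda>(u, d). b u d)"
    and Am_cont: "continuous_on (U \<times> D) (\<lambda>(u, d). Am u d)"
    and stable: "\<exists>P. sym_posdef P \<and> (\<forall>u\<in>U. \<forall>d\<in>D. negdef (transpose (Am u d) ** P + P ** Am u d))"
begin

lemma controlled_linear_ode:
  obtains Kb KA where "\<And>t u d. t \<le> 0 \<Longrightarrow> u measurable_on {t..0} \<Longrightarrow> d measurable_on {t..0} \<Longrightarrow>
    (\<And>s. s \<in> {t..0} \<Longrightarrow> u s \<in> U \<and> d s \<in> D) \<Longrightarrow>
    linear_ode (\<lambda>s. b (u s) (d s)) (\<lambda>s. Am (u s) (d s)) t Kb KA"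
proof -
  obtain Kb where Kb: "\<And>u d. u \<in> U \<Longrightarrow> d \<in> D \<Longrightarrow> norm (b u d) \<le> Kb"
    using bounded_on_compact_Times[OF U(1) D(1) b_cont] by blast
  obtain KAm where KAm: "KAm \<ge> 0" "\<And>u d. u \<in> U \<Longrightarrow> d \<in> D \<Longrightarrow> norm (Am u d) \<le> KAm"
    using bounded_on_compact_Times[OF U(1) D(1) Am_cont] by blast
  define KA where "KA = real CARD('n) * real CARD('n) * KAm"
  have KA: "norm (Am u d *v x) \<le> KA * norm x" if "u \<in> U" "d \<in> D" for u d x
  proof -
    have "norm (Am u d *v x) \<le> real CARD('n) * real CARD('n) * norm (Am u d) * norm x"
      by (rule norm_matrix_vector_mult_le)
    also have "\<dots> \<le> KA * norm x"
      unfolding KA_def using KAm(2)[OF that] by (intro mult_right_mono mult_left_mono) auto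
    finally show ?thesis .
  qed
  show ?thesis
  proof (rule that)
    fix t :: real and u d
    assume t: "t \<le> 0" and u: "u measurable_on {t..0}" and d: "d measurable_on {t..0}"
      and ud: "\<And>s. s \<in> {t..0} \<Longrightarrow> u s \<in> U \<and> d s \<in> D"
    show "linear_ode (\<lambda>s. b (u s) (d s)) (\<lambda>s. Am (u s) (d s)) t Kb KA"
    proof
      show "(\<lambda>s. b (u s) (d s)) measurable_on {t..0}"
        using measurable_on_compose_controls[OF U(1) D(1) b_cont u d ud] by simp
      show "(\<lambda>s. Am (u s) (d s)) measurable_on {t..0}"
        using measurable_on_compose_controls[OF U(1) D(1) Am_cont u d ud] by simp
    qed (use t ud Kb KA in auto)
  qed
qed

lemma lyapunov_matrix:
  obtains P c pP m where "\<And>x y. x \<bullet> (P *v y) = y \<bullet> (P *v x)"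
    "\<And>u d x. u \<in> U \<Longrightarrow> d \<in> D \<Longrightarrow> x \<bullet> (P *v (Am u d *v x)) \<le> - c * (norm x)\<^sup>2" "c > 0"
    "\<And>x y. \<bar>x \<bullet> (P *v y)\<bar> \<le> pP * norm x * norm y" "pP > 0"
    "m > 0" "\<And>x. m * (norm x)\<^sup>2 \<le> x \<bullet> (P *v x)"
proof -
  obtain P where P: "transpose P = P" "\<And>x. x \<noteq> 0 \<Longrightarrow> x \<bullet> (P *v x) > 0"
    and neg: "\<And>u d. u \<in> U \<Longrightarrow> d \<in> D \<Longrightarrow> negdef (transpose (Am u d) ** P + P ** Am u d)"
    using stable unfolding sym_posdef_def by blast
  have UD: "compact (U \<times> D)" "U \<times> D \<noteq> {}" using U D by (auto intro: compact_Times)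
  obtain c where c: "c > 0" and diss: "\<And>p x. p \<in> U \<times> D \<Longrightarrow>
      x \<bullet> (P *v (Am (fst p) (snd p) *v x)) \<le> - c * (norm x)\<^sup>2"
  proof (rule quadratic_form_uniformly_negative[OF UD])
    have "continuous_on ((U \<times> D) \<times> sphere 0 1) (\<lambda>q. (\<lambda>(u, d). Am u d) (fst q))"
      by (rule continuous_on_compose2[OF Am_cont continuous_on_fst]) auto
    then show "continuous_on ((U \<times> D) \<times> sphere 0 1)
        (\<lambda>q. snd q \<bullet> (P *v (Am (fst (fst q)) (snd (fst q)) *v snd q)))"
      by (intro continuous_intros) (auto simp: case_prod_beta)
  qed (use negdef_lyapunov_inner_neg[OF P(1) neg] in \<open>auto simp: mult.commute matrix_vector_mult_scaleR
         power2_eq_square mem_Times_iff\<close>)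
  obtain m where m: "m > 0" and coercive: "\<And>x. - (x \<bullet> (P *v x)) \<le> - m * (norm x)\<^sup>2"
    by (rule quadratic_form_uniformly_negative[of "{0::real}" "\<lambda>_ x. - (x \<bullet> (P *v x))"])
       (use P(2) in \<open>auto intro!: continuous_intros simp: matrix_vector_mult_scaleR power2_eq_square\<close>)
  define pP where "pP = real CARD('n) * real CARD('n) * norm P + 1"
  have pP: "\<bar>x \<bullet> (P *v y)\<bar> \<le> pP * norm x * norm y" for x y
  proof -
    have "\<bar>x \<bullet> (P *v y)\<bar> \<le> norm x * (real CARD('n) * real CARD('n) * norm P) * norm y"
      by (rule abs_inner_matrix_vector_mult_le)
    also have "\<dots> \<le> norm x * pP * norm y"
      unfolding pP_def by (intro mult_right_mono mult_left_mono) auto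
    finally show ?thesis by (simp add: mult_ac)
  qed
  have "pP > 0" unfolding pP_def by (simp add: add_nonneg_pos)
  show ?thesis
  proof (rule that)
    show "x \<bullet> (P *v y) = y \<bullet> (P *v x)" for x y by (rule inner_matrix_vector_sym[OF P(1)])
    show "x \<bullet> (P *v (Am u d *v x)) \<le> - c * (norm x)\<^sup>2" if "u \<in> U" "d \<in> D" for u d x
      using diss[of "(u, d)" x] that by simp
    show "m * (norm x)\<^sup>2 \<le> x \<bullet> (P *v x)" for x using coercive[of x] by simp
  qed (fact c pP \<open>pP > 0\<close> m)+
qed

lemma controlled_dissipative_lin_ode:
  obtains Kb KA P c pP m where
    "\<And>t u d. t \<le> 0 \<Longrightarrow> u measurable_on {t..0} \<Longrightarrow> d measurable_on {t..0} \<Longrightarrow>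
      (\<And>s. s \<in> {t..0} \<Longrightarrow> u s \<in> U \<and> d s \<in> D) \<Longrightarrow>
      dissipative_lin_ode (\<lambda>s. b (u s) (d s)) (\<lambda>s. Am (u s) (d s)) t Kb KA P c pP"
    "m > 0" "\<And>x. m * (norm x)\<^sup>2 \<le> x \<bullet> (P *v x)"
proof -
  obtain Kb KA where ode: "\<And>t u d. t \<le> 0 \<Longrightarrow> u measurable_on {t..0} \<Longrightarrow> d measurable_on {t..0} \<Longrightarrow>
      (\<And>s. s \<in> {t..0} \<Longrightarrow> u s \<in> U \<and> d s \<in> D) \<Longrightarrow>
      linear_ode (\<lambda>s. b (u s) (d s)) (\<lambda>s. Am (u s) (d s)) t Kb KA"
    using controlled_linear_ode by blast
  obtain P c pP m where P: "\<And>x y. x \<bullet> (P *v y) = y \<bullet> (P *v x)"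
    "\<And>u d x. u \<in> U \<Longrightarrow> d \<in> D \<Longrightarrow> x \<bullet> (P *v (Am u d *v x)) \<le> - c * (norm x)\<^sup>2" "c > 0"
    "\<And>x y. \<bar>x \<bullet> (P *v y)\<bar> \<le> pP * norm x * norm y" "pP > 0"
    and m: "m > 0" "\<And>x. m * (norm x)\<^sup>2 \<le> x \<bullet> (P *v x)"
    using lyapunov_matrix by blast
  show ?thesis
  proof (rule that[OF _ m])
    fix t :: real and u d
    assume t: "t \<le> 0" and u: "u measurable_on {t..0}" and d: "d measurable_on {t..0}"
      and ud: "\<And>s. s \<in> {t..0} \<Longrightarrow> u s \<in> U \<and> d s \<in> D"
    interpret linear_ode "\<lambda>s. b (u s) (d s)" "\<lambda>s. Am (u s) (d s)" t Kb KA
      by (rule ode[OF t u d ud])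
    show "dissipative_lin_ode (\<lambda>s. b (u s) (d s)) (\<lambda>s. Am (u s) (d s)) t Kb KA P c pP"
      by unfold_locales (use P ud in auto)
  qed
qed

end

context stable_linear_system
begin

lemma controlled_solution:
  assumes "t \<le> 0" "u measurable_on {t..0}" "d measurable_on {t..0}" "\<And>s. s \<in> {t..0} \<Longrightarrow> u s \<in> U \<and> d s \<in> D"
  shows "is_lin_ode_sol (\<lambda>s. b (u s) (d s)) (\<lambda>s. Am (u s) (d s)) t y0
    (THE Y. is_lin_ode_sol (\<lambda>s. b (u s) (d s)) (\<lambda>s. Am (u s) (d s)) t y0 Y \<and> (\<forall>\<tau>. \<tau> \<notin> {t..0} \<longrightarrow> Y \<tau> = 0))"
proof -
  obtain Kb KA where "\<And>t u d. t \<le> 0 \<Longrightarrow> u measurable_on {t..0} \<Longrightarrow> d measurable_on {t..0} \<Longrightarrow>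
      (\<And>s. s \<in> {t..0} \<Longrightarrow> u s \<in> U \<and> d s \<in> D) \<Longrightarrow>
      linear_ode (\<lambda>s. b (u s) (d s)) (\<lambda>s. Am (u s) (d s)) t Kb KA"
    using controlled_linear_ode by blast
  from this[OF assms] show ?thesis by (rule linear_ode.the_lin_ode_sol)
qed

lemma controlled_solution_endpoint_bounded:
  obtains R where "\<And>t u d Y. t \<le> 0 \<Longrightarrow> u measurable_on {t..0} \<Longrightarrow> d measurable_on {t..0} \<Longrightarrow>
    (\<And>s. s \<in> {t..0} \<Longrightarrow> u s \<in> U \<and> d s \<in> D) \<Longrightarrow>
    is_lin_ode_sol (\<lambda>s. b (u s) (d s)) (\<lambda>s. Am (u s) (d s)) t y0 Y \<Longrightarrow> norm (Y 0) \<le> R"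
proof -
  obtain Kb KA P c pP m where diss: "\<And>t u d. t \<le> 0 \<Longrightarrow> u measurable_on {t..0} \<Longrightarrow> d measurable_on {t..0} \<Longrightarrow>
      (\<And>s. s \<in> {t..0} \<Longrightarrow> u s \<in> U \<and> d s \<in> D) \<Longrightarrow>
      dissipative_lin_ode (\<lambda>s. b (u s) (d s)) (\<lambda>s. Am (u s) (d s)) t Kb KA P c pP"
    and m: "m > 0" and coercive: "\<And>x. m * (norm x)\<^sup>2 \<le> x \<bullet> (P *v x)"
    using controlled_dissipative_lin_ode by blast
  define Vmax where "Vmax = max (y0 \<bullet> (P *v y0)) (((pP * Kb)\<^sup>2 / c) / (c / pP))"
  show ?thesis
  proof (rule that[of "sqrt (Vmax / m)"])
    fix t u d Y
    assume t: "t \<le> 0" and u: "u measurable_on {t..0}" and d: "d measurable_on {t..0}"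
      and ud: "\<And>s. s \<in> {t..0} \<Longrightarrow> u s \<in> U \<and> d s \<in> D"
      and Y: "is_lin_ode_sol (\<lambda>s. b (u s) (d s)) (\<lambda>s. Am (u s) (d s)) t y0 Y"
    have "m * (norm (Y 0))\<^sup>2 \<le> Vmax"
      using coercive[of "Y 0"] dissipative_lin_ode.lyapunov_bound[OF diss[OF t u d ud] Y]
      unfolding Vmax_def by linarith
    then have "(norm (Y 0))\<^sup>2 \<le> Vmax / m" using m by (simp add: field_simps)
    then show "norm (Y 0) \<le> sqrt (Vmax / m)" by (rule real_le_rsqrt)
  qed
qed

end

section \<open>The cost functional as a time average\<close>

lemma is_car_sol_iff: "is_car_sol g A z u d t y0 Y \<longleftrightarrow>
    is_lin_ode_sol (\<lambda>s. g z (u s) (d s)) (\<lambda>s. A z (u s) (d s)) t y0 Y"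
  by (simp add: is_car_sol_def is_lin_ode_sol_def)

lemma Jtil_cong:
  assumes "\<And>s. t \<le> s \<Longrightarrow> s < 0 \<Longrightarrow> u' s = u s \<and> d' s = d s"
  shows "Jtil f g A M z lam t y0 u' d' = Jtil f g A M z lam t y0 u d"
proof -
  have "is_car_sol g A z u' d' t y0 Y = is_car_sol g A z u d t y0 Y" for Y
  proof -
    have "((\<lambda>s. g z (u' s) (d' s) + A z (u' s) (d' s) *v Y s) has_integral (Y \<tau> - y0)) {t..\<tau>} \<longleftrightarrow>
          ((\<lambda>s. g z (u s) (d s) + A z (u s) (d s) *v Y s) has_integral (Y \<tau> - y0)) {t..\<tau>}"
      if "\<tau> \<le> 0" for \<tau>
      by (rule has_integral_spike_eq[of "{0}"]) (use assms that in auto)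
    then show ?thesis unfolding is_car_sol_def by auto
  qed
  then have "ytil g A z u' d' t y0 = ytil g A z u d t y0" unfolding ytil_def by simp
  then show ?thesis unfolding Jtil_def
    by (intro arg_cong[where f = "\<lambda>x. (1 / \<bar>t\<bar>) * x"] integral_spike[of "{0}"]) (use assms in auto)
qed

lemma Jtil_eq_average:
  assumes t: "t < 0"
    and Y: "is_lin_ode_sol (\<lambda>s. g z (u s) (d s)) (\<lambda>s. A z (u s) (d s)) t y0 (ytil g A z u d t y0)"
    and F_int: "(\<lambda>s. lam \<bullet> Fmap f g M z (u s) (d s)) integrable_on {t..0}"
  shows "Jtil f g A M z lam t y0 u d = (integral {t..0} (\<lambda>s. lam \<bullet> Fmap f g M z (u s) (d s))
    + lam \<bullet> (M z *v (ytil g A z u d t y0 0 - y0))) / \<bar>t\<bar>"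
proof -
  let ?Y = "ytil g A z u d t y0"
  let ?h = "\<lambda>s. g z (u s) (d s) + A z (u s) (d s) *v ?Y s"
  have h_int: "?h integrable_on {t..0}" using lin_ode_sol_integrable[OF Y] t by simp
  have lin: "bounded_linear (\<lambda>v. lam \<bullet> (M z *v v))"
    by (rule bounded_linear_compose[OF bounded_linear_inner_right matrix_vector_mul_bounded_linear])
  have "integral {t..0} (\<lambda>s. lam \<bullet> (M z *v ?h s)) = lam \<bullet> (M z *v integral {t..0} ?h)"
    using integral_linear[OF h_int lin] by (simp add: o_def)
  also have "integral {t..0} ?h = ?Y 0 - y0"
    using lin_ode_sol_eq_integral[OF Y, of 0] t by simp
  finally have boundary: "integral {t..0} (\<lambda>s. lam \<bullet> (M z *v ?h s)) = lam \<bullet> (M z *v (?Y 0 - y0))" .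
  have "lam \<bullet> (f z (u s) (d s) + M z *v (A z (u s) (d s) *v ?Y s))
      = lam \<bullet> Fmap f g M z (u s) (d s) + lam \<bullet> (M z *v ?h s)" for s
    by (simp add: Fmap_def matrix_vector_right_distrib inner_add_right inner_diff_right)
  then have "Jtil f g A M z lam t y0 u d
      = (1 / \<bar>t\<bar>) * integral {t..0} (\<lambda>s. lam \<bullet> Fmap f g M z (u s) (d s) + lam \<bullet> (M z *v ?h s))"
    unfolding Jtil_def by (simp only:)
  also have "\<dots> = (1 / \<bar>t\<bar>) * (integral {t..0} (\<lambda>s. lam \<bullet> Fmap f g M z (u s) (d s))
      + lam \<bullet> (M z *v (?Y 0 - y0)))"
    using integral_add[OF F_int integrable_linear[OF h_int lin, unfolded o_def]] boundary by simp
  finally show ?thesis by simp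
qed

lemma continuous_on_slice:
  assumes "continuous_on (UNIV \<times> U \<times> D) (\<lambda>(z, u, d). F z u d)"
  shows "continuous_on (U \<times> D) (\<lambda>(u, d). F z u d)"
proof -
  have "continuous_on (U \<times> D) (\<lambda>p. (\<lambda>(z, u, d). F z u d) (z, p))"
    by (rule continuous_on_compose2[OF assms]) (auto intro!: continuous_intros)
  then show ?thesis by (simp add: case_prod_beta)
qed

locale linear_game = stable_linear_system U D "g z" "A z"
  for U :: "(real^'mu) set" and D :: "(real^'md) set"
    and g :: "real^'nz \<Rightarrow> real^'mu \<Rightarrow> real^'md \<Rightarrow> real^'ny"
    and A :: "real^'nz \<Rightarrow> real^'mu \<Rightarrow> real^'md \<Rightarrow> real^'ny^'ny" and z :: "real^'nz" +
  fixes f :: "real^'nz \<Rightarrow> real^'mu \<Rightarrow> real^'md \<Rightarrow> real^'nz" and M :: "real^'nz \<Rightarrow> real^'ny^'nz"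
    and lam :: "real^'nz"
  assumes f_cont: "continuous_on (U \<times> D) (\<lambda>(u, d). f z u d)"
begin

lemma running_payoff_continuous: "continuous_on (U \<times> D) (\<lambda>(u, d). lam \<bullet> Fmap f g M z u d)"
  using f_cont b_cont unfolding Fmap_def case_prod_beta by (intro continuous_intros)

lemma running_payoff_bounded:
  obtains K where "\<And>u d. u \<in> U \<Longrightarrow> d \<in> D \<Longrightarrow> \<bar>lam \<bullet> Fmap f g M z u d\<bar> \<le> K"
proof -
  obtain K where K: "\<And>u d. u \<in> U \<Longrightarrow> d \<in> D \<Longrightarrow> norm (lam \<bullet> Fmap f g M z u d) \<le> K"
    using bounded_on_compact_Times[OF U(1) D(1) running_payoff_continuous] by blast
  show ?thesis by (rule that[of K]) (use K in simp)
qed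

context
  fixes t :: real and u d
  assumes t: "t \<le> 0" and u: "u measurable_on {t..0}" and d: "d measurable_on {t..0}"
    and ud: "\<And>s. s \<in> {t..0} \<Longrightarrow> u s \<in> U \<and> d s \<in> D"
begin

lemma running_payoff_integrable: "(\<lambda>s. lam \<bullet> Fmap f g M z (u s) (d s)) integrable_on {t..0}"
proof -
  obtain K where "\<And>u d. u \<in> U \<Longrightarrow> d \<in> D \<Longrightarrow> \<bar>lam \<bullet> Fmap f g M z u d\<bar> \<le> K"
    using running_payoff_bounded by blast
  then show ?thesis
    using measurable_on_compose_controls[OF U(1) D(1) running_payoff_continuous u d ud] ud
    by (intro measurable_bounded_integrable_on[where B = K]) auto
qed

lemma ytil_solves: "is_lin_ode_sol (\<lambda>s. g z (u s) (d s)) (\<lambda>s. A z (u s) (d s)) t y0 (ytil g A z u d t y0)"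
  unfolding ytil_def is_car_sol_iff by (rule controlled_solution[OF t u d ud])

end

lemma Jtil_eq_average_admissible:
  assumes t: "t < 0" and u: "u \<in> admissible U t 0" and d: "d \<in> admissible D t 0"
  obtains u' d' where "u' measurable_on {t..0}" "d' measurable_on {t..0}"
    "\<And>s. s \<in> {t..0} \<Longrightarrow> u' s \<in> U \<and> d' s \<in> D"
    "(\<lambda>s. lam \<bullet> Fmap f g M z (u s) (d s)) integrable_on {t..0}"
    "Jtil f g A M z lam t y0 u d = (integral {t..0} (\<lambda>s. lam \<bullet> Fmap f g M z (u s) (d s))
       + lam \<bullet> (M z *v (ytil g A z u' d' t y0 0 - y0))) / \<bar>t\<bar>"
proof -
  obtain u0 d0 where u0: "u0 \<in> U" and d0: "d0 \<in> D" using U(2) D(2) by blast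
  \<comment> \<open>Admissible controls live on \<open>[t, 0)\<close>; redefine them at \<open>0\<close> to apply the results on \<open>[t, 0]\<close>.\<close>
  define u' where "u' = (\<lambda>s. if s < 0 then u s else u0)"
  define d' where "d' = (\<lambda>s. if s < 0 then d s else d0)"
  note u' = admissible_extend_right[OF u u0, folded u'_def]
  note d' = admissible_extend_right[OF d d0, folded d'_def]
  have closed: "t \<le> 0" "\<And>s. s \<in> {t..0} \<Longrightarrow> u' s \<in> U \<and> d' s \<in> D"
    using t u'(2) d'(2) by (auto simp: u'_def d'_def)
  let ?\<phi> = "\<lambda>u d s. lam \<bullet> Fmap f g M z (u s) (d s)"
  have \<phi>'_int: "?\<phi> u' d' integrable_on {t..0}"
    by (rule running_payoff_integrable[OF closed(1) u'(1) d'(1) closed(2)])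
  have same: "?\<phi> u' d' s = ?\<phi> u d s" if "s \<in> {t..0} - {0}" for s
    using that by (simp add: u'_def d'_def)
  have "integral {t..0} (?\<phi> u' d') = integral {t..0} (?\<phi> u d)"
    by (rule integral_spike[of "{0}"]) (use same in auto)
  moreover have "Jtil f g A M z lam t y0 u d = Jtil f g A M z lam t y0 u' d'"
    by (rule Jtil_cong) (simp add: u'_def d'_def)
  ultimately show ?thesis
    using that[OF u'(1) d'(1) closed(2) integrable_spike[OF \<phi>'_int, of "{0}"]] same
      Jtil_eq_average[OF t ytil_solves[OF closed(1) u'(1) d'(1) closed(2)] \<phi>'_int] by auto
qed

lemma Jtil_near_average:
  obtains \<beta> where "\<And>t u d. t < 0 \<Longrightarrow> u \<in> admissible U t 0 \<Longrightarrow> d \<in> admissible D t 0 \<Longrightarrow>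
    (\<lambda>s. lam \<bullet> Fmap f g M z (u s) (d s)) integrable_on {t..0} \<and>
    \<bar>Jtil f g A M z lam t y u d - integral {t..0} (\<lambda>s. lam \<bullet> Fmap f g M z (u s) (d s)) / \<bar>t\<bar>\<bar> \<le> \<beta> / \<bar>t\<bar>"
proof -
  obtain R where R: "\<And>t u d Y. t \<le> 0 \<Longrightarrow> u measurable_on {t..0} \<Longrightarrow> d measurable_on {t..0} \<Longrightarrow>
      (\<And>s. s \<in> {t..0} \<Longrightarrow> u s \<in> U \<and> d s \<in> D) \<Longrightarrow>
      is_lin_ode_sol (\<lambda>s. g z (u s) (d s)) (\<lambda>s. A z (u s) (d s)) t y Y \<Longrightarrow> norm (Y 0) \<le> R"
    using controlled_solution_endpoint_bounded by blast
  define CM where "CM = real CARD('nz) * real CARD('ny) * norm (M z)"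
  show ?thesis
  proof (rule that[of "norm lam * CM * (R + norm y)"])
    fix t u d assume t: "t < 0" and u: "u \<in> admissible U t 0" and d: "d \<in> admissible D t 0"
    obtain u' d' where u': "u' measurable_on {t..0}" and d': "d' measurable_on {t..0}"
      and closed: "\<And>s. s \<in> {t..0} \<Longrightarrow> u' s \<in> U \<and> d' s \<in> D"
      and \<phi>_int: "(\<lambda>s. lam \<bullet> Fmap f g M z (u s) (d s)) integrable_on {t..0}"
      and J: "Jtil f g A M z lam t y u d = (integral {t..0} (\<lambda>s. lam \<bullet> Fmap f g M z (u s) (d s))
         + lam \<bullet> (M z *v (ytil g A z u' d' t y 0 - y))) / \<bar>t\<bar>"
      using Jtil_eq_average_admissible[OF t u d, of y] by blast
    have "norm (ytil g A z u' d' t y 0 - y) \<le> R + norm y"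
      using R[OF _ u' d' closed ytil_solves[OF _ u' d' closed]] t
      by (meson add_mono less_imp_le norm_triangle_ineq4 order_trans order_refl)
    then have "\<bar>lam \<bullet> (M z *v (ytil g A z u' d' t y 0 - y))\<bar> \<le> norm lam * CM * (R + norm y)"
      using abs_inner_matrix_vector_mult_le[of lam "M z"] unfolding CM_def
      by (meson mult_left_mono mult_nonneg_nonneg norm_ge_zero of_nat_0_le_iff order_trans)
    then have "\<bar>lam \<bullet> (M z *v (ytil g A z u' d' t y 0 - y))\<bar> / \<bar>t\<bar> \<le> norm lam * CM * (R + norm y) / \<bar>t\<bar>"
      by (rule divide_right_mono) simp
    then show "(\<lambda>s. lam \<bullet> Fmap f g M z (u s) (d s)) integrable_on {t..0} \<and>
        \<bar>Jtil f g A M z lam t y u d - integral {t..0} (\<lambda>s. lam \<bullet> Fmap f g M z (u s) (d s)) / \<bar>t\<bar>\<bar>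
        \<le> norm lam * CM * (R + norm y) / \<bar>t\<bar>"
      using \<phi>_int unfolding J by (simp add: add_divide_distrib abs_divide)
  qed
qed

lemma game_values_near_static_values:
  obtains \<beta> where "\<And>t ts. t < 0 \<Longrightarrow> is_partition t ts \<Longrightarrow>
      (SUP d\<in>D. INF u\<in>U. lam \<bullet> Fmap f g M z u d) - \<beta> / \<bar>t\<bar> \<le> Vplus U D f g A M z lam ts t y \<and>
      Vplus U D f g A M z lam ts t y \<le> (INF u\<in>U. SUP d\<in>D. lam \<bullet> Fmap f g M z u d) + \<beta> / \<bar>t\<bar> \<and>
      (SUP d\<in>D. INF u\<in>U. lam \<bullet> Fmap f g M z u d) - \<beta> / \<bar>t\<bar> \<le> Vminus U D f g A M z lam ts t y \<and>
      Vminus U D f g A M z lam ts t y \<le> (INF u\<in>U. SUP d\<in>D. lam \<bullet> Fmap f g M z u d) + \<beta> / \<bar>t\<bar>"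
proof -
  obtain \<beta> where near_average: "\<And>t u d. t < 0 \<Longrightarrow> u \<in> admissible U t 0 \<Longrightarrow> d \<in> admissible D t 0 \<Longrightarrow>
      (\<lambda>s. lam \<bullet> Fmap f g M z (u s) (d s)) integrable_on {t..0} \<and>
      \<bar>Jtil f g A M z lam t y u d - integral {t..0} (\<lambda>s. lam \<bullet> Fmap f g M z (u s) (d s)) / \<bar>t\<bar>\<bar> \<le> \<beta> / \<bar>t\<bar>"
    using Jtil_near_average by blast
  obtain K where K: "\<And>u d. u \<in> U \<Longrightarrow> d \<in> D \<Longrightarrow> \<bar>lam \<bullet> Fmap f g M z u d\<bar> \<le> K"
    using running_payoff_bounded by blast
  show ?thesis
  proof (rule that)
    fix t ts assume t: "t < 0" and ts: "is_partition t ts"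
    note le = game_values_le_INF_SUP[where \<phi> = "\<lambda>u d. lam \<bullet> Fmap f g M z u d"
        and J = "Jtil f g A M z lam t y", OF U(2) D(2) K t near_average[OF t] ts]
    note ge = game_values_ge_SUP_INF[where \<phi> = "\<lambda>u d. lam \<bullet> Fmap f g M z u d"
        and J = "Jtil f g A M z lam t y", OF U(2) D(2) K t near_average[OF t] ts]
    show "(SUP d\<in>D. INF u\<in>U. lam \<bullet> Fmap f g M z u d) - \<beta> / \<bar>t\<bar> \<le> Vplus U D f g A M z lam ts t y \<and>
      Vplus U D f g A M z lam ts t y \<le> (INF u\<in>U. SUP d\<in>D. lam \<bullet> Fmap f g M z u d) + \<beta> / \<bar>t\<bar> \<and>
      (SUP d\<in>D. INF u\<in>U. lam \<bullet> Fmap f g M z u d) - \<beta> / \<bar>t\<bar> \<le> Vminus U D f g A M z lam ts t y \<and>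
      Vminus U D f g A M z lam ts t y \<le> (INF u\<in>U. SUP d\<in>D. lam \<bullet> Fmap f g M z u d) + \<beta> / \<bar>t\<bar>"
      unfolding Vplus_def Vminus_def using le ge by blast
  qed
qed

end

theorem mainTheorem3:
  fixes U :: "(real^'mu) set" and D :: "(real^'md) set"
    and f :: "real^'nz \<Rightarrow> real^'mu \<Rightarrow> real^'md \<Rightarrow> real^'nz"
    and g :: "real^'nz \<Rightarrow> real^'mu \<Rightarrow> real^'md \<Rightarrow> real^'ny"
    and A :: "real^'nz \<Rightarrow> real^'mu \<Rightarrow> real^'md \<Rightarrow> real^'ny^'ny"
    and M :: "real^'nz \<Rightarrow> real^'ny^'nz"
    and y :: "real^'ny" and z :: "real^'nz" and lam :: "real^'nz"
  assumes "compact U" "U \<noteq> {}" "compact D" "D \<noteq> {}"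
    and "continuous_on (UNIV \<times> U \<times> D) (\<lambda>(z, u, d). f z u d)"
    and "continuous_on (UNIV \<times> U \<times> D) (\<lambda>(z, u, d). g z u d)"
    and "continuous_on (UNIV \<times> U \<times> D) (\<lambda>(z, u, d). A z u d)"
    and "continuous_on UNIV M"
    and stab: "\<exists>P0. sym_posdef P0 \<and>
                 (\<forall>u\<in>U. \<forall>d\<in>D. negdef (transpose (A z u d) ** P0 + P0 ** A z u d))"
    and saddle: "\<And>z' lam'. (INF u\<in>U. SUP d\<in>D. lam' \<bullet> Fmap f g M z' u d)
                          = (SUP d\<in>D. INF u\<in>U. lam' \<bullet> Fmap f g M z' u d)"
  shows "\<exists>\<beta>>0. \<forall>t<0. \<forall>ts. is_partition t ts \<longrightarrow>
           \<bar>Vplus U D f g A M z lam ts t y - Ham U D f g M z lam\<bar> \<le> \<beta> / \<bar>t\<bar> \<and>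
           \<bar>Vminus U D f g A M z lam ts t y - Ham U D f g M z lam\<bar> \<le> \<beta> / \<bar>t\<bar>"
proof -
  interpret linear_game U D g A z f M lam
    using assms(1-4) stab continuous_on_slice[OF assms(5)] continuous_on_slice[OF assms(6)]
      continuous_on_slice[OF assms(7)]
    by unfold_locales auto
  obtain \<beta> where bounds: "\<And>t ts. t < 0 \<Longrightarrow> is_partition t ts \<Longrightarrow>
      Ham U D f g M z lam - \<beta> / \<bar>t\<bar> \<le> Vplus U D f g A M z lam ts t y \<and>
      Vplus U D f g A M z lam ts t y \<le> Ham U D f g M z lam + \<beta> / \<bar>t\<bar> \<and>
      Ham U D f g M z lam - \<beta> / \<bar>t\<bar> \<le> Vminus U D f g A M z lam ts t y \<and>
      Vminus U D f g A M z lam ts t y \<le> Ham U D f g M z lam + \<beta> / \<bar>t\<bar>"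
    using game_values_near_static_values unfolding Ham_def saddle[symmetric] by blast
  show ?thesis
  proof (intro exI[of _ "\<bar>\<beta>\<bar> + 1"] conjI allI impI)
    fix t :: real and ts assume "t < 0" "is_partition t ts"
    moreover have "\<beta> / \<bar>t\<bar> \<le> (\<bar>\<beta>\<bar> + 1) / \<bar>t\<bar>" by (simp add: divide_right_mono)
    ultimately show "\<bar>Vplus U D f g A M z lam ts t y - Ham U D f g M z lam\<bar> \<le> (\<bar>\<beta>\<bar> + 1) / \<bar>t\<bar>"
      "\<bar>Vminus U D f g A M z lam ts t y - Ham U D f g M z lam\<bar> \<le> (\<bar>\<beta>\<bar> + 1) / \<bar>t\<bar>"
      using bounds unfolding abs_le_iff by fastforce+
  qed simp
qed

end
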